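(* Fix a classifier $f_\theta$ and a sequence of queueing systems as described in the context, and suppose Assumptions (DGP), (HT) and (UI) hold. Under any work-conserving p-FCFS policy, for all $k,l\in[K]$ and $t\in[0,1]$, \[ \tilde N_{kl}^n(t)=\frac{p_k^n q_{kl}^n}{\sum_{r=1}^K p_r^n q_{rl}^n}\,\tilde N_l^n(t)+o_n(1), \] where $o_n(1)$ denotes a term whose supremum over $t\in[0,1]$ tends to $0$ as $n\to\infty$.
   Context: Model. For each $n\in\mathbb N$, system $n$ is a single-server queue on the time horizon $[0,n]$, starting empty, with $K$ classes. Jobs $i=1,2,\dots$ arrive in a single stream with interarrival times $u_i^n$; each job has a feature vector $X_i^n\in\mathbb R^d$, a one-hot true class $Y_i^n=(Y_{i1}^n,\dots,Y_{iK}^n)\in\{0,1\}^K$ and a service requirement $v_i^n>0$. A fixed classifier $f_\theta$ gives the one-hot predicted class $\hat Y_i^n=f_\theta(X_i^n)$. Let $\lambda^n=1/E[u_1^n]$, $p_k^n=P(Y_{1k}^n=1)$, $1/\mu_k^n=E[v_1^n\mid Y_{1k}^n=1]$, $q_{kl}^n=P(\hat Y_{1l}^n=1\mid Y_{1k}^n=1)$, and $A_0^n(t)=\max\{m:\sum_{i=1}^m u_i^n\le t\}$. Assumption (DGP): for each $n$, (i) $\{(u_i^n,v_i^n,X_i^n,Y_i^n)\}_{i\ge1}$ is i.i.d.; (ii) $\{u_i^n\}$ is independent of $\{(v_i^n,X_i^n,Y_i^n)\}$; (iii) $v_i^n$ and $X_i^n$ are conditionally independent given $Y_i^n$. Assumption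 (HT): there exist $p_k,q_{kl}\in[0,1]$ and positive $\lambda,\mu_k$ with $\sum_k p_kq_{kl}>0$ for all $l$, $\lambda\sum_k p_k/\mu_k=1$, and $n^{1/2}(\lambda^n-\lambda)$, $n^{1/2}(\mu_k^n-\mu_k)$, $n^{1/2}(p_k^n-p_k)$, $n^{1/2}(q_{kl}^n-q_{kl})$ all tend to $0$. Assumption (UI): for each $n$, $E[(u_1^n)^2],E[(v_1^n)^2],E[(X_1^n)^2]<\infty$, and $E[(u_1^n)^2\mathbf 1\{u_1^n>x\}]\le g_u(x)$, $E[(v_1^n)^2\mathbf 1\{v_1^n>x\}]\le g_v(x)$ for fixed functions $g_u,g_v$ tending to $0$ as $x\to\infty$; moreover $E[(u_1^n)^2]\to\alpha_u\in(0,\infty)$ and $E[(v_1^n)^2\mid Y_{1k}^n=1]\to\alpha_{v,k}\in(0,\infty)$ for each $k$. Policies. A scheduling policy decides at each time which predicted class the server works on (preemption between classes allowed, based on information available so far). It is p-FCFS if within each predicted class jobs are served in order of arrival, and work-conserving if the server never idles while jobs are present. Processes. $N_{kl}^n(t)$ is the number of jobs of true class $k$ predicted as class $l$ present (waiting or in service) at time $t$ in system $n$, $N_l^n=\sum_k N_{kl}^n$, and $\tilde N_{kl}^n(t)=n^{-1/2}N_{kl}^n(nt)$, $\tilde N_l^n(t)=n^{-1/2}N_l^n(nt)$ for $t\in[0,1]$. Sample-path convention: all processes are realized (via a Skorohod-type construction preserving distributions) on a common probability space on which the diffusion-scaled primitive processes converge uniformly on $[0,1]$ almost surely to a multidimensional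 Brownian motion; the statement holds almost surely on this space. *)

theory Defs
  imports "HOL-Probability.Probability"
begin

text \<open>
  Jobs are indexed 0,1,2,... (job i here is job i+1
  of the paper).  For system n and outcome w:
    u n i w  interarrival time,   v n i w  service requirement,
    X n i w  feature vector (type 'x, a Euclidean space = R^d),
    Y n i w  true class, an index in {0..<K} (encodes the one-hot vector Y_i),
    f (X n i w)  predicted class (index in {0..<K}) given by the fixed classifier f.
  A scheduling policy is given, for every n and w, by a selection c n w :: real => nat option:
  c n w r = Some l means the server works on predicted class l at time r, None means idle.
\<close>

definition lam_n :: "'w measure \<Rightarrow> (nat \<Rightarrow> nat \<Rightarrow> 'w \<Rightarrow> real) \<Rightarrow> nat \<Rightarrow> real" where
  "lam_n M u n = 1 / (\<integral>w. u n 0 w \<partial>M)"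

definition p_n :: "'w measure \<Rightarrow> (nat \<Rightarrow> nat \<Rightarrow> 'w \<Rightarrow> nat) \<Rightarrow> nat \<Rightarrow> nat \<Rightarrow> real" where
  "p_n M Y n k = measure M {w \<in> space M. Y n 0 w = k}"

definition q_n :: "'w measure \<Rightarrow> (nat \<Rightarrow> nat \<Rightarrow> 'w \<Rightarrow> 'x) \<Rightarrow> (nat \<Rightarrow> nat \<Rightarrow> 'w \<Rightarrow> nat)
    \<Rightarrow> ('x \<Rightarrow> nat) \<Rightarrow> nat \<Rightarrow> nat \<Rightarrow> nat \<Rightarrow> real" where
  "q_n M X Y f n k l =
     measure M {w \<in> space M. Y n 0 w = k \<and> f (X n 0 w) = l} / p_n M Y n k"

definition cond_exp_class :: "'w measure \<Rightarrow> ('w \<Rightarrow> real) \<Rightarrow> ('w \<Rightarrow> nat) \<Rightarrow> nat \<Rightarrow> real" where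
  "cond_exp_class M Z C k =
     (\<integral>w. Z w * indicator {w. C w = k} w \<partial>M) / measure M {w \<in> space M. C w = k}"

definition mu_n :: "'w measure \<Rightarrow> (nat \<Rightarrow> nat \<Rightarrow> 'w \<Rightarrow> real) \<Rightarrow> (nat \<Rightarrow> nat \<Rightarrow> 'w \<Rightarrow> nat)
    \<Rightarrow> nat \<Rightarrow> nat \<Rightarrow> real" where
  "mu_n M v Y n k = 1 / cond_exp_class M (v n 0) (Y n 0) k"

definition A0 :: "(nat \<Rightarrow> real) \<Rightarrow> real \<Rightarrow> nat" where
  "A0 uu t = (GREATEST m. (\<Sum>i<m. uu i) \<le> t)"

definition cumwork :: "(nat \<Rightarrow> real) \<Rightarrow> (nat \<Rightarrow> nat) \<Rightarrow> nat \<Rightarrow> nat \<Rightarrow> real" where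
  "cumwork vv yh l i = (\<Sum>j\<in>{j. j \<le> i \<and> yh j = l}. vv j)"

definition alloc :: "(real \<Rightarrow> nat option) \<Rightarrow> nat \<Rightarrow> real \<Rightarrow> real" where
  "alloc cc l s = measure lebesgue {r \<in> {0..s}. cc r = Some l}"

text \<open>Since within a
  predicted class jobs are served in order of arrival (p-FCFS), the effort alloc cc l s given
  to class l has completed exactly those class-l jobs whose cumulative class-l work is covered.\<close>
definition Nkl :: "(nat \<Rightarrow> real) \<Rightarrow> (nat \<Rightarrow> real) \<Rightarrow> (nat \<Rightarrow> nat) \<Rightarrow> (nat \<Rightarrow> nat)
    \<Rightarrow> (real \<Rightarrow> nat option) \<Rightarrow> nat \<Rightarrow> nat \<Rightarrow> real \<Rightarrow> nat" where
  "Nkl uu vv yy yh cc k l s =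
     card {i. i < A0 uu s \<and> yy i = k \<and> yh i = l \<and> \<not> (cumwork vv yh l i \<le> alloc cc l s)}"

definition Nl :: "nat \<Rightarrow> (nat \<Rightarrow> real) \<Rightarrow> (nat \<Rightarrow> real) \<Rightarrow> (nat \<Rightarrow> nat) \<Rightarrow> (nat \<Rightarrow> nat)
    \<Rightarrow> (real \<Rightarrow> nat option) \<Rightarrow> nat \<Rightarrow> real \<Rightarrow> nat" where
  "Nl K uu vv yy yh cc l s = (\<Sum>k<K. Nkl uu vv yy yh cc k l s)"

text \<open>A p-FCFS policy (FCFS within each predicted class is built into Nkl) which is
  work-conserving on the horizon [0,H]: the server only works on a predicted class that has
  jobs present and never idles while jobs are present.\<close>
definition wc_pfcfs_policy :: "nat \<Rightarrow> real \<Rightarrow> (nat \<Rightarrow> real) \<Rightarrow> (nat \<Rightarrow> real) \<Rightarrow> (nat \<Rightarrow> nat)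
    \<Rightarrow> (nat \<Rightarrow> nat) \<Rightarrow> (real \<Rightarrow> nat option) \<Rightarrow> bool" where
  "wc_pfcfs_policy K H uu vv yy yh cc \<longleftrightarrow>
     (\<forall>l. {r. cc r = Some l} \<in> sets lebesgue) \<and>
     (\<forall>r\<in>{0..H}.
        (\<forall>l. cc r = Some l \<longrightarrow> l < K \<and> Nl K uu vv yy yh cc l r > 0) \<and>
        (cc r = None \<longrightarrow> (\<Sum>l<K. Nl K uu vv yy yh cc l r) = 0))"

datatype prim = PA | PC nat nat | PV nat nat

definition Prim :: "nat \<Rightarrow> prim set" where
  "Prim K = insert PA ({PC k l |k l. k < K \<and> l < K} \<union> {PV k l |k l. k < K \<and> l < K})"

definition prim_hat :: "'w measure \<Rightarrow> (nat \<Rightarrow> nat \<Rightarrow> 'w \<Rightarrow> real) \<Rightarrow> (nat \<Rightarrow> nat \<Rightarrow> 'w \<Rightarrow> real)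
    \<Rightarrow> (nat \<Rightarrow> nat \<Rightarrow> 'w \<Rightarrow> 'x) \<Rightarrow> (nat \<Rightarrow> nat \<Rightarrow> 'w \<Rightarrow> nat) \<Rightarrow> ('x \<Rightarrow> nat)
    \<Rightarrow> nat \<Rightarrow> 'w \<Rightarrow> real \<Rightarrow> prim \<Rightarrow> real" where
  "prim_hat M u v X Y f n w t i =
     (let a = A0 (\<lambda>j. u n j w) (real n * t) in
      case i of
        PA \<Rightarrow> (real a - lam_n M u n * real n * t) / sqrt (real n)
      | PC k l \<Rightarrow> (real (card {j. j < a \<and> Y n j w = k \<and> f (X n j w) = l})
                   - p_n M Y n k * q_n M X Y f n k l * real a) / sqrt (real n)
      | PV k l \<Rightarrow> (\<Sum>j\<in>{j. j < a \<and> Y n j w = k \<and> f (X n j w) = l}. v n j w - 1 / mu_n M v Y n k)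
                   / sqrt (real n))"

definition centered_gaussian :: "'w measure \<Rightarrow> ('w \<Rightarrow> real) \<Rightarrow> real \<Rightarrow> bool" where
  "centered_gaussian M Z s2 \<longleftrightarrow>
     (s2 = 0 \<and> Z \<in> borel_measurable M \<and> (AE w in M. Z w = 0)) \<or>
     (s2 > 0 \<and> distributed M lborel Z (normal_density 0 (sqrt s2)))"

definition brownian_motion01 :: "'w measure \<Rightarrow> 'i set \<Rightarrow> (real \<Rightarrow> 'w \<Rightarrow> 'i \<Rightarrow> real) \<Rightarrow> bool" where
  "brownian_motion01 M I B \<longleftrightarrow>
     finite I \<and>
     (AE w in M. \<forall>i\<in>I. B 0 w i = 0 \<and> continuous_on {0..1} (\<lambda>t. B t w i)) \<and>
     (\<exists>S :: 'i \<Rightarrow> 'i \<Rightarrow> real. \<forall>(a :: 'i \<Rightarrow> real) s t. 0 \<le> s \<longrightarrow> s \<le> t \<longrightarrow> t \<le> 1 \<longrightarrow>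
        centered_gaussian M (\<lambda>w. \<Sum>i\<in>I. a i * (B t w i - B s w i))
          ((t - s) * (\<Sum>i\<in>I. \<Sum>j\<in>I. a i * a j * S i j))) \<and>
     (\<forall>(ts :: nat \<Rightarrow> real) m. 0 \<le> ts 0 \<longrightarrow> ts m \<le> 1 \<longrightarrow> (\<forall>j<m. ts j \<le> ts (Suc j)) \<longrightarrow>
        prob_space.indep_vars M (\<lambda>_. PiM I (\<lambda>_. borel))
          (\<lambda>j w. restrict (\<lambda>i. B (ts (Suc j)) w i - B (ts j) w i) I) {..<m})"

end

theory Submission
  imports Defs
begin

text \<open>
  The argument is pathwise. Fix an outcome on which the diffusion-scaled primitive processes
  converge uniformly on [0, 1] to limits with continuous paths; nothing else is used from the
  distributional assumptions. The total workload is the reflection of the netput process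
  (work arrived minus elapsed time), which is of order \<open>\<surd>n\<close> under the heavy-traffic condition,
  so the workload is \<open>O(\<surd>n)\<close> as well. Since predicted class l is served first come first served,
  the class-l jobs present at time s are exactly the class-l arrivals since the arrival time T
  of the oldest waiting one, up to a batch of simultaneous arrivals at T. Their work is bounded by
  the workload while class-l work arrives at a positive rate, so s - T = \<open>O(\<surd>n) = o(n)\<close>. Over
  such a short window the scaled class-count processes are asymptotically constant, so these
  arrivals split among the true classes in the proportions \<open>p_k q_kl / \<Sum>_r p_r q_rl\<close> up to
  \<open>o(\<surd>n)\<close> jobs, and batches are \<open>o(\<surd>n)\<close> as well.
\<close>

section \<open>Counting arrivals by class\<close>

lemma card_filter_interval_eq_diff:
  assumes "m \<le> (m'::nat)"
  shows "real (card {i. m \<le> i \<and> i < m' \<and> P i})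
    = real (card {i. i < m' \<and> P i}) - real (card {i. i < m \<and> P i})"
proof -
  have split: "{i. i < m' \<and> P i} = {i. i < m \<and> P i} \<union> {i. m \<le> i \<and> i < m' \<and> P i}"
    using assms by auto
  have "card {i. i < m' \<and> P i} = card {i. i < m \<and> P i} + card {i. m \<le> i \<and> i < m' \<and> P i}"
    unfolding split by (rule card_Un_disjoint) auto
  then show ?thesis by simp
qed

lemma sum_card_filter_classes:
  assumes "\<And>i. yy i < (K::nat)"
  shows "(\<Sum>k<K. card {i. m \<le> i \<and> i < (m'::nat) \<and> yy i = k \<and> P i}) = card {i. m \<le> i \<and> i < m' \<and> P i}"
proof -
  let ?S = "{i. m \<le> i \<and> i < m' \<and> P i}"
  have "yy ` ?S \<subseteq> {..<K}" using assms by auto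
  then have "(\<Sum>k<K. \<Sum>i | i \<in> ?S \<and> yy i = k. 1) = (\<Sum>i\<in>?S. 1::nat)"
    by (intro sum.group) auto
  moreover have "{i. i \<in> ?S \<and> yy i = k} = {i. m \<le> i \<and> i < m' \<and> yy i = k \<and> P i}" for k
    by auto
  ultimately show ?thesis by simp
qed

definition class_count :: "(nat \<Rightarrow> nat) \<Rightarrow> (nat \<Rightarrow> nat) \<Rightarrow> nat \<Rightarrow> nat \<Rightarrow> nat \<Rightarrow> nat" where
  "class_count yy yh k l m = card {i. i < m \<and> yy i = k \<and> yh i = l}"

definition count_imbalance ::
    "nat \<Rightarrow> (nat \<Rightarrow> nat) \<Rightarrow> (nat \<Rightarrow> nat) \<Rightarrow> nat \<Rightarrow> nat \<Rightarrow> real \<Rightarrow> nat \<Rightarrow> real" where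
  "count_imbalance K yy yh k l \<rho> m =
     real (class_count yy yh k l m) - \<rho> * (\<Sum>k'<K. real (class_count yy yh k' l m))"

lemma count_imbalance_diff:
  assumes "m \<le> m'"
  shows "count_imbalance K yy yh k l \<rho> m' - count_imbalance K yy yh k l \<rho> m
    = real (card {i. m \<le> i \<and> i < m' \<and> yy i = k \<and> yh i = l})
      - \<rho> * (\<Sum>k'<K. real (card {i. m \<le> i \<and> i < m' \<and> yy i = k' \<and> yh i = l}))"
  unfolding count_imbalance_def class_count_def card_filter_interval_eq_diff[OF assms] sum_subtractf
  by (simp add: algebra_simps)

lemma abs_count_imbalance_diff_le:
  assumes "\<And>i. yy i < K" "0 \<le> \<rho>" "\<rho> \<le> 1" "m \<le> m'"
  shows "\<bar>count_imbalance K yy yh k l \<rho> m' - count_imbalance K yy yh k l \<rho> m\<bar> \<le> real m' - real m"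
proof -
  define n_k where "n_k = card {i. m \<le> i \<and> i < m' \<and> yy i = k \<and> yh i = l}"
  define n_all where "n_all = card {i. m \<le> i \<and> i < m' \<and> yh i = l}"
  have "n_k \<le> n_all" unfolding n_k_def n_all_def by (rule card_mono) auto
  moreover have "n_all \<le> card {m..<m'}" unfolding n_all_def by (rule card_mono) auto
  ultimately have "real n_k \<le> real n_all" "real n_all \<le> real m' - real m"
    using assms(4) by (simp_all add: of_nat_diff)
  moreover have "\<rho> * real n_all \<le> real n_all" using assms(2,3) by (intro mult_left_le_one_le) auto
  moreover have "0 \<le> \<rho> * real n_all" using assms(2) by simp
  moreover have sum_eq: "(\<Sum>k'<K. real (card {i. m \<le> i \<and> i < m' \<and> yy i = k' \<and> yh i = l})) = real n_all"
    unfolding n_all_def using sum_card_filter_classes[of yy K m m' "\<lambda>i. yh i = l", OF assms(1)]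
    by (simp flip: of_nat_sum)
  ultimately show ?thesis
    unfolding count_imbalance_diff[OF assms(4)] n_k_def[symmetric] sum_eq abs_le_iff by auto
qed

section \<open>A sample path of a work-conserving p-FCFS queue\<close>

definition arrival_time :: "(nat \<Rightarrow> real) \<Rightarrow> nat \<Rightarrow> real" where
  "arrival_time uu i = (\<Sum>j<Suc i. uu j)"

definition arrived_work :: "(nat \<Rightarrow> real) \<Rightarrow> (nat \<Rightarrow> real) \<Rightarrow> (nat \<Rightarrow> nat) \<Rightarrow> nat \<Rightarrow> real \<Rightarrow> real" where
  "arrived_work uu vv yh l r = (\<Sum>j | j < A0 uu r \<and> yh j = l. vv j)"

definition total_work :: "nat \<Rightarrow> (nat \<Rightarrow> real) \<Rightarrow> (nat \<Rightarrow> real) \<Rightarrow> (nat \<Rightarrow> nat) \<Rightarrow> real \<Rightarrow> real" where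
  "total_work K uu vv yh r = (\<Sum>l<K. arrived_work uu vv yh l r)"

definition total_alloc :: "nat \<Rightarrow> (real \<Rightarrow> nat option) \<Rightarrow> real \<Rightarrow> real" where
  "total_alloc K cc r = (\<Sum>l<K. alloc cc l r)"

locale wc_pfcfs_path =
  fixes K :: nat and H :: real and uu vv :: "nat \<Rightarrow> real" and yy yh :: "nat \<Rightarrow> nat"
    and cc :: "real \<Rightarrow> nat option"
  assumes interarrival_nonneg: "\<And>i. 0 \<le> uu i" and service_pos: "\<And>i. 0 < vv i"
    and class_less: "\<And>i. yy i < K" and prediction_less: "\<And>i. yh i < K"
    and horizon_reached: "\<exists>m. H < (\<Sum>i<m. uu i)"
    and policy: "wc_pfcfs_policy K H uu vv yy yh cc"
begin

abbreviation "arrival \<equiv> arrival_time uu"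
abbreviation "work \<equiv> arrived_work uu vv yh"
abbreviation "workload r \<equiv> total_work K uu vv yh r - total_alloc K cc r"

lemma partial_sum_mono: "m \<le> m' \<Longrightarrow> (\<Sum>i<m. uu i) \<le> (\<Sum>i<m'. uu i)"
  by (rule sum_mono2) (auto simp: interarrival_nonneg)

lemma less_A0_iff:
  assumes "0 \<le> r" "r \<le> H"
  shows "i < A0 uu r \<longleftrightarrow> arrival i \<le> r"
proof -
  obtain m where m: "H < (\<Sum>i<m. uu i)" using horizon_reached by auto
  let ?P = "\<lambda>k. (\<Sum>i<k. uu i) \<le> r"
  have bound: "k \<le> m" if "?P k" for k
  proof (rule ccontr)
    assume "\<not> k \<le> m"
    then have "(\<Sum>i<m. uu i) \<le> (\<Sum>i<k. uu i)" by (intro partial_sum_mono) auto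
    with m that assms show False by linarith
  qed
  have greatest: "?P (A0 uu r)"
    unfolding A0_def by (rule GreatestI_nat[of ?P 0 m]) (use assms bound in auto)
  have le_greatest: "k \<le> A0 uu r" if "?P k" for k
    unfolding A0_def by (rule Greatest_le_nat[of ?P k m]) (use that bound in auto)
  show ?thesis
  proof
    assume "i < A0 uu r"
    then have "arrival i \<le> (\<Sum>i<A0 uu r. uu i)"
      unfolding arrival_time_def by (intro partial_sum_mono) auto
    with greatest show "arrival i \<le> r" by linarith
  next
    assume "arrival i \<le> r"
    then have "Suc i \<le> A0 uu r" by (intro le_greatest) (simp add: arrival_time_def)
    then show "i < A0 uu r" by simp
  qed
qed

lemma arrival_mono: "i \<le> j \<Longrightarrow> arrival i \<le> arrival j"
  unfolding arrival_time_def by (intro partial_sum_mono) auto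

lemma arrival_nonneg: "0 \<le> arrival i"
  unfolding arrival_time_def by (intro sum_nonneg) (auto simp: interarrival_nonneg)

lemma A0_mono:
  assumes "0 \<le> r" "r \<le> r'" "r' \<le> H"
  shows "A0 uu r \<le> A0 uu r'"
proof (rule ccontr)
  assume "\<not> A0 uu r \<le> A0 uu r'"
  then have "arrival (A0 uu r') \<le> r" using less_A0_iff[of r "A0 uu r'"] assms by simp
  then have "A0 uu r' < A0 uu r'" using less_A0_iff[of r' "A0 uu r'"] assms by simp
  then show False by simp
qed

lemma arrivals_at_subset: "0 \<le> T \<Longrightarrow> T \<le> H \<Longrightarrow> {i. arrival i = T} \<subseteq> {..<A0 uu T}"
  using less_A0_iff by auto

lemma card_arrivals_at_le: "0 \<le> T \<Longrightarrow> T \<le> H \<Longrightarrow> card {i. arrival i = T} \<le> A0 uu T"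
  using card_mono[OF _ arrivals_at_subset] by fastforce

lemma card_arrivals_at_le_diff:
  assumes "0 \<le> t" "t < T" "T \<le> H"
  shows "card {i. arrival i = T} \<le> A0 uu T - A0 uu t"
proof -
  have "{i. arrival i = T} \<subseteq> {A0 uu t..<A0 uu T}"
  proof
    fix i assume "i \<in> {i. arrival i = T}"
    then have "\<not> i < A0 uu t" "i < A0 uu T"
      using less_A0_iff[of t i] less_A0_iff[of T i] assms by auto
    then show "i \<in> {A0 uu t..<A0 uu T}" by simp
  qed
  then show ?thesis using card_mono[of "{A0 uu t..<A0 uu T}"] by fastforce
qed

\<comment> \<open>jobs \<open>m, \<dots>, A0 uu (arrival m) - 1\<close> all arrive at the same instant as job \<open>m\<close>\<close>
lemma A0_arrival_sub_le_card_arrivals_at: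
  assumes "arrival m \<le> H"
  shows "real (A0 uu (arrival m)) - real m \<le> real (card {i. arrival i = arrival m})"
proof -
  have "{m..<A0 uu (arrival m)} \<subseteq> {i. arrival i = arrival m}"
  proof
    fix i assume "i \<in> {m..<A0 uu (arrival m)}"
    then have i: "m \<le> i" "i < A0 uu (arrival m)" by simp_all
    have "arrival i \<le> arrival m" using less_A0_iff[OF arrival_nonneg, of m i] i(2) assms by simp
    with arrival_mono[OF i(1)] show "i \<in> {i. arrival i = arrival m}" by simp
  qed
  moreover have "finite {i. arrival i = arrival m}"
    using arrivals_at_subset[OF arrival_nonneg assms] by (rule finite_subset) simp
  ultimately have "card {m..<A0 uu (arrival m)} \<le> card {i. arrival i = arrival m}"
    by (rule card_mono[rotated])
  then show ?thesis by (cases "m \<le> A0 uu (arrival m)") (simp_all add: of_nat_diff)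
qed

lemma arrived_work_mono: "0 \<le> r \<Longrightarrow> r \<le> r' \<Longrightarrow> r' \<le> H \<Longrightarrow> work l r \<le> work l r'"
  unfolding arrived_work_def using A0_mono[of r r']
  by (intro sum_mono2) (auto simp: less_imp_le[OF service_pos])

lemma arrived_work_nonneg: "0 \<le> work l r"
  unfolding arrived_work_def by (intro sum_nonneg) (auto simp: less_imp_le[OF service_pos])

lemma cumwork_le_arrived_work: "i < A0 uu r \<Longrightarrow> yh i = l \<Longrightarrow> cumwork vv yh l i \<le> work l r"
  unfolding arrived_work_def cumwork_def by (intro sum_mono2) (auto simp: less_imp_le[OF service_pos])

lemma cumwork_mono: "i \<le> i' \<Longrightarrow> cumwork vv yh l i \<le> cumwork vv yh l i'"
  unfolding cumwork_def by (intro sum_mono2) (auto simp: less_imp_le[OF service_pos])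

lemma arrived_work_eq_cumwork_Max:
  assumes "{j. j < A0 uu r \<and> yh j = l} \<noteq> {}"
  shows "work l r = cumwork vv yh l (Max {j. j < A0 uu r \<and> yh j = l})"
proof -
  let ?S = "{j. j < A0 uu r \<and> yh j = l}"
  have "Max ?S \<in> ?S" using Max_in[OF _ assms] by simp
  then have "{j. j \<le> Max ?S \<and> yh j = l} = ?S" using Max_ge[of ?S] by fastforce
  then show ?thesis unfolding arrived_work_def cumwork_def by simp
qed

lemma served_measurable: "{r. cc r = Some l} \<in> sets lebesgue"
  using policy unfolding wc_pfcfs_policy_def by auto

lemma served_lmeasurable:
  "{a..b} \<inter> {r. cc r = Some l} \<in> lmeasurable" "{a<..b} \<inter> {r. cc r = Some l} \<in> lmeasurable"
  by (rule fmeasurableI2[of "{a..b}"]; auto intro: served_measurable)+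

lemma alloc_eq_measure: "alloc cc l s = measure lebesgue ({0..s} \<inter> {r. cc r = Some l})"
  unfolding alloc_def Int_def by simp

lemma alloc_split:
  assumes "0 \<le> a" "a \<le> b"
  shows "alloc cc l b = alloc cc l a + measure lebesgue ({a<..b} \<inter> {r. cc r = Some l})"
proof -
  have split: "{0..b} \<inter> {r. cc r = Some l} = ({0..a} \<inter> {r. cc r = Some l}) \<union> ({a<..b} \<inter> {r. cc r = Some l})"
    using assms by auto
  show ?thesis
    unfolding alloc_eq_measure split
    by (rule measure_Union)
      (use served_lmeasurable(1)[of 0 a l] served_lmeasurable(2)[of a b l] in \<open>auto simp: fmeasurable_def\<close>)
qed

lemma alloc_mono: "0 \<le> a \<Longrightarrow> a \<le> b \<Longrightarrow> alloc cc l a \<le> alloc cc l b"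
  using alloc_split[of a b l] by simp

lemma alloc_le_add_diff:
  assumes "0 \<le> a" "a \<le> b"
  shows "alloc cc l b \<le> alloc cc l a + (b - a)"
proof -
  have "{a<..b} \<in> lmeasurable" by (rule fmeasurableI2[of "{a..b}"]) auto
  then have "measure lebesgue ({a<..b} \<inter> {r. cc r = Some l}) \<le> measure lebesgue {a<..b}"
    by (intro measure_mono_fmeasurable) (auto intro: served_measurable)
  then show ?thesis using alloc_split[OF assms, of l] assms by simp
qed

lemma alloc_zero: "alloc cc l 0 = 0"
proof -
  have "{0..0} \<inter> {r. cc r = Some l} \<subseteq> {0..(0::real)}" by auto
  then have "measure lebesgue ({0..0} \<inter> {r. cc r = Some l}) \<le> measure lebesgue {0..(0::real)}"
    by (rule measure_mono_fmeasurable[OF _ fmeasurableD[OF served_lmeasurable(1)] lmeasurable_interval(1)])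
  then show ?thesis unfolding alloc_eq_measure using measure_nonneg[of lebesgue] by (simp add: order_antisym)
qed

lemma alloc_eq_if_not_served:
  assumes "0 \<le> a" "a \<le> b" "\<And>r. a < r \<Longrightarrow> r \<le> b \<Longrightarrow> cc r \<noteq> Some l"
  shows "alloc cc l b = alloc cc l a"
proof -
  have "{a<..b} \<inter> {r. cc r = Some l} = {}" using assms(3) by auto
  then show ?thesis using alloc_split[OF assms(1,2), of l] by simp
qed

lemma total_alloc_mono: "0 \<le> a \<Longrightarrow> a \<le> b \<Longrightarrow> total_alloc K cc a \<le> total_alloc K cc b"
  unfolding total_alloc_def by (intro sum_mono alloc_mono)

lemma total_alloc_zero: "total_alloc K cc 0 = 0"
  unfolding total_alloc_def by (simp add: alloc_zero)

lemma served_class_nonempty: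
  "0 \<le> r \<Longrightarrow> r \<le> H \<Longrightarrow> cc r = Some l \<Longrightarrow> l < K \<and> 0 < Nl K uu vv yy yh cc l r"
  using policy unfolding wc_pfcfs_policy_def by auto

lemma idle_imp_empty:
  "0 \<le> r \<Longrightarrow> r \<le> H \<Longrightarrow> cc r = None \<Longrightarrow> (\<Sum>l<K. Nl K uu vv yy yh cc l r) = 0"
  using policy unfolding wc_pfcfs_policy_def by auto

lemma total_alloc_busy:
  assumes "0 \<le> a" "a \<le> b" "b \<le> H" "\<And>r. a < r \<Longrightarrow> r \<le> b \<Longrightarrow> cc r \<noteq> None"
  shows "total_alloc K cc b = total_alloc K cc a + (b - a)"
proof -
  let ?S = "\<lambda>l. {a<..b} \<inter> {r. cc r = Some l}"
  have "(\<Union>l<K. ?S l) = {a<..b}"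
  proof
    show "{a<..b} \<subseteq> (\<Union>l<K. ?S l)"
    proof
      fix r assume r: "r \<in> {a<..b}"
      then obtain l where "cc r = Some l" using assms(4) by fastforce
      with r assms show "r \<in> (\<Union>l<K. ?S l)" using served_class_nonempty[of r l] by auto
    qed
  qed auto
  moreover have "measure lebesgue (\<Union>l<K. ?S l) = (\<Sum>l<K. measure lebesgue (?S l))"
    using fmeasurableD[OF served_lmeasurable(2)] fmeasurableD2[OF served_lmeasurable(2)]
    by (intro measure_finite_Union) (auto simp: disjoint_family_on_def)
  ultimately show ?thesis
    unfolding total_alloc_def using alloc_split[OF assms(1,2)] assms(2) by (simp add: sum.distrib)
qed

lemma Nl_pos_imp_unfinished:
  assumes "0 < Nl K uu vv yy yh cc l r"
  obtains i where "i < A0 uu r" "yh i = l" "\<not> cumwork vv yh l i \<le> alloc cc l r"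
proof -
  obtain k where "Nkl uu vv yy yh cc k l r \<noteq> 0"
    using assms unfolding Nl_def by (metis less_irrefl sum.neutral)
  then show ?thesis using that unfolding Nkl_def by (auto simp: card_eq_0_iff)
qed

lemma arrived_work_le_alloc_if_empty:
  assumes "Nl K uu vv yy yh cc l r = 0"
  shows "work l r \<le> alloc cc l r"
proof (cases "{j. j < A0 uu r \<and> yh j = l} = {}")
  case True
  then show ?thesis unfolding arrived_work_def True by (simp add: alloc_def)
next
  case False
  let ?m = "Max {j. j < A0 uu r \<and> yh j = l}"
  have "?m < A0 uu r" "yh ?m = l" using Max_in[OF _ False] by auto
  moreover have "Nkl uu vv yy yh cc (yy ?m) l r = 0"
    using assms class_less[of ?m] unfolding Nl_def by simp
  ultimately have "cumwork vv yh l ?m \<le> alloc cc l r" unfolding Nkl_def by auto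
  then show ?thesis using arrived_work_eq_cumwork_Max[OF False] by simp
qed

lemma alloc_le_arrived_work:
  assumes "0 \<le> s" "s \<le> H"
  shows "alloc cc l s \<le> work l s"
proof (rule ccontr)
  assume "\<not> ?thesis"
  then have excess: "work l s < alloc cc l s" by simp
  define E where "E = {r. 0 \<le> r \<and> r \<le> s \<and> alloc cc l r \<le> work l r}"
  have "0 \<in> E" unfolding E_def using assms by (simp add: alloc_zero arrived_work_nonneg)
  moreover have bdd: "bdd_above E" unfolding E_def by (rule bdd_aboveI[of _ s]) auto
  ultimately have r1: "0 \<le> Sup E" "Sup E \<le> s"
    using cSup_upper[of 0 E] by (auto intro!: cSup_least simp: E_def)
  \<comment> \<open>after the last time at which the claim holds, class l would be served with no job waiting\<close>
  have not_served: "cc r \<noteq> Some l" if r: "Sup E < r" "r \<le> s" for r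
  proof
    assume served: "cc r = Some l"
    have "r \<notin> E"
    proof
      assume "r \<in> E"
      then have "r \<le> Sup E" by (rule cSup_upper[OF _ bdd])
      with r show False by simp
    qed
    then have "work l r < alloc cc l r" using r r1 by (auto simp: E_def)
    moreover have "0 < Nl K uu vv yy yh cc l r"
      using served_class_nonempty[OF _ _ served] r r1 assms by auto
    then obtain i where "i < A0 uu r" "yh i = l" "\<not> cumwork vv yh l i \<le> alloc cc l r"
      by (rule Nl_pos_imp_unfinished)
    ultimately show False using cumwork_le_arrived_work[of i r l] by linarith
  qed
  have "alloc cc l s = alloc cc l (Sup E)" by (rule alloc_eq_if_not_served[OF r1 not_served])
  define \<eta> where "\<eta> = (alloc cc l s - work l s) / 2"
  have "0 < \<eta>" using excess unfolding \<eta>_def by simp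
  then obtain r where r: "r \<in> E" "Sup E - \<eta> < r" using less_cSupE[of "Sup E - \<eta>" E] \<open>0 \<in> E\<close> by auto
  then have "r \<le> Sup E" "0 \<le> r" "r \<le> s" "alloc cc l r \<le> work l r"
    using cSup_upper[OF r(1) bdd] by (auto simp: E_def)
  then have "alloc cc l (Sup E) \<le> work l s + \<eta>"
    using alloc_le_add_diff[of r "Sup E" l] arrived_work_mono[of r s l] r(2) assms by linarith
  then show False using \<open>alloc cc l s = alloc cc l (Sup E)\<close> excess by (simp add: \<eta>_def field_simps)
qed

lemma workload_nonneg: "0 \<le> s \<Longrightarrow> s \<le> H \<Longrightarrow> 0 \<le> workload s"
  unfolding total_work_def total_alloc_def using alloc_le_arrived_work
  by (simp add: sum_mono)

text \<open>
  Reflection: the workload vanishes at idle times and decreases at unit rate while the server is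
  busy. The slack 1 accounts for an idle time that only approximates the last one before s.
\<close>
lemma workload_le_netput:
  assumes "0 \<le> s" "s \<le> H"
  obtains r where "0 \<le> r" "r \<le> s"
    "workload s \<le> \<bar>total_work K uu vv yh s - s\<bar> + \<bar>total_work K uu vv yh r - r\<bar> + 1"
proof (cases "\<forall>r. 0 < r \<and> r \<le> s \<longrightarrow> cc r \<noteq> None")
  case True
  then have "total_alloc K cc s = s"
    using total_alloc_busy[of 0 s] total_alloc_zero assms by auto
  then show ?thesis using that[of 0] assms by simp
next
  case False
  define I where "I = {r. 0 \<le> r \<and> r \<le> s \<and> cc r = None}"
  have "I \<noteq> {}" using False by (auto simp: I_def)
  have bdd: "bdd_above I" unfolding I_def by (rule bdd_aboveI[of _ s]) auto
  have "Sup I \<le> s" using \<open>I \<noteq> {}\<close> by (intro cSup_least) (auto simp: I_def)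
  obtain r where r: "r \<in> I" "Sup I - 1 < r" using less_cSupE[of "Sup I - 1" I] \<open>I \<noteq> {}\<close> by auto
  then have r_le: "r \<le> Sup I" "0 \<le> r" "r \<le> s" "cc r = None"
    using cSup_upper[OF r(1) bdd] by (auto simp: I_def)
  have busy: "cc r' \<noteq> None" if "Sup I < r'" "r' \<le> s" for r'
  proof
    assume "cc r' = None"
    then have "r' \<in> I" using that r_le unfolding I_def by auto
    with that show False using cSup_upper[OF _ bdd, of r'] by simp
  qed
  have "total_alloc K cc s = total_alloc K cc (Sup I) + (s - Sup I)"
    using busy r_le \<open>Sup I \<le> s\<close> assms by (intro total_alloc_busy) auto
  moreover have "total_work K uu vv yh r \<le> total_alloc K cc r"
    unfolding total_work_def total_alloc_def
    using idle_imp_empty[of r] r_le assms by (intro sum_mono arrived_work_le_alloc_if_empty) auto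
  moreover have "total_alloc K cc r \<le> total_alloc K cc (Sup I)"
    using r_le by (intro total_alloc_mono) auto
  ultimately have "workload s \<le> \<bar>total_work K uu vv yh s - s\<bar> + \<bar>total_work K uu vv yh r - r\<bar> + 1"
    using r(2) r_le by linarith
  with r_le show ?thesis by (intro that)
qed

lemma oldest_waiting_job:
  assumes "0 \<le> s" "s \<le> H" "0 < Nl K uu vv yy yh cc l s"
  obtains m where "m < A0 uu s" "arrival m \<le> s" "m < A0 uu (arrival m)"
    "\<And>k. Nkl uu vv yy yh cc k l s = card {i. m \<le> i \<and> i < A0 uu s \<and> yy i = k \<and> yh i = l}"
    "work l s - work l (arrival m) \<le> workload s"
proof -
  define P where "P = {i. i < A0 uu s \<and> yh i = l \<and> \<not> cumwork vv yh l i \<le> alloc cc l s}"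
  have "P \<noteq> {}" using Nl_pos_imp_unfinished[OF assms(3)] unfolding P_def by blast
  moreover have "finite P" unfolding P_def by simp
  ultimately obtain m where m: "m \<in> P" "\<And>i. i \<in> P \<Longrightarrow> m \<le> i"
    using Min_in Min_le by blast
  then have m_less: "m < A0 uu s" and m_pred: "yh m = l" and m_unfinished: "alloc cc l s < cumwork vv yh l m"
    unfolding P_def by auto
  have arrival_le: "arrival m \<le> s" using less_A0_iff[OF assms(1,2)] m_less by simp
  then have m_arrived: "m < A0 uu (arrival m)"
    using less_A0_iff[OF arrival_nonneg] assms by simp
  \<comment> \<open>FCFS within class l: every class-l job after the oldest waiting one is waiting too\<close>
  have "i \<in> P" if "m \<le> i" "i < A0 uu s" "yh i = l" for i
    using cumwork_mono[OF that(1), of l] m_unfinished that unfolding P_def by auto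
  then have "{i. i < A0 uu s \<and> yy i = k \<and> yh i = l \<and> \<not> cumwork vv yh l i \<le> alloc cc l s}
      = {i. m \<le> i \<and> i < A0 uu s \<and> yy i = k \<and> yh i = l}" for k
    using m(2) unfolding P_def by blast
  then have Nkl_eq: "Nkl uu vv yy yh cc k l s = card {i. m \<le> i \<and> i < A0 uu s \<and> yy i = k \<and> yh i = l}"
    for k unfolding Nkl_def by simp
  have "work l s - work l (arrival m) < work l s - alloc cc l s"
    using cumwork_le_arrived_work[OF m_arrived m_pred] m_unfinished by linarith
  also have "\<dots> \<le> (\<Sum>l'<K. work l' s - alloc cc l' s)"
    using prediction_less[of m] m_pred alloc_le_arrived_work[OF assms(1,2)]
    by (intro member_le_sum) auto
  also have "\<dots> = workload s" unfolding total_work_def total_alloc_def by (simp add: sum_subtractf)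
  finally have "work l s - work l (arrival m) \<le> workload s" by (rule less_imp_le)
  then show ?thesis by (rule that[OF m_less arrival_le m_arrived Nkl_eq])
qed

lemma share_deviation_le:
  assumes "0 \<le> s" "s \<le> H" "0 \<le> \<rho>" "\<rho> \<le> 1" "k < K"
  obtains T where "0 \<le> T" "T \<le> s" "work l s - work l T \<le> workload s"
    "\<bar>real (Nkl uu vv yy yh cc k l s) - \<rho> * real (Nl K uu vv yy yh cc l s)\<bar>
      \<le> \<bar>count_imbalance K yy yh k l \<rho> (A0 uu s) - count_imbalance K yy yh k l \<rho> (A0 uu T)\<bar>
        + real (card {i. arrival i = T})"
proof (cases "Nl K uu vv yy yh cc l s = 0")
  case True
  then have "Nkl uu vv yy yh cc k l s = 0" using assms(5) by (simp add: Nl_def)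
  with True have deviation: "\<bar>real (Nkl uu vv yy yh cc k l s) - \<rho> * real (Nl K uu vv yy yh cc l s)\<bar>
      \<le> \<bar>count_imbalance K yy yh k l \<rho> (A0 uu s) - count_imbalance K yy yh k l \<rho> (A0 uu s)\<bar>
        + real (card {i. arrival i = s})"
    by simp
  have "work l s - work l s \<le> workload s" using workload_nonneg assms by simp
  then show ?thesis by (rule that[OF assms(1) order_refl _ deviation])
next
  case False
  then obtain m where m: "m < A0 uu s" "arrival m \<le> s" "m < A0 uu (arrival m)"
    "\<And>k. Nkl uu vv yy yh cc k l s = card {i. m \<le> i \<and> i < A0 uu s \<and> yy i = k \<and> yh i = l}"
    "work l s - work l (arrival m) \<le> workload s"
    using oldest_waiting_job assms by blast
  let ?D = "count_imbalance K yy yh k l \<rho>"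
  have "real (Nkl uu vv yy yh cc k l s) - \<rho> * real (Nl K uu vv yy yh cc l s) = ?D (A0 uu s) - ?D m"
    unfolding count_imbalance_diff[OF less_imp_le[OF m(1)]] Nl_def m(4) by simp
  moreover have "\<bar>?D (A0 uu (arrival m)) - ?D m\<bar> \<le> real (A0 uu (arrival m)) - real m"
    using m(3) class_less assms(3,4) by (intro abs_count_imbalance_diff_le) auto
  moreover have "real (A0 uu (arrival m)) - real m \<le> real (card {i. arrival i = arrival m})"
    using m(2) assms(2) by (intro A0_arrival_sub_le_card_arrivals_at) simp
  ultimately have "\<bar>real (Nkl uu vv yy yh cc k l s) - \<rho> * real (Nl K uu vv yy yh cc l s)\<bar>
      \<le> \<bar>?D (A0 uu s) - ?D (A0 uu (arrival m))\<bar> + real (card {i. arrival i = arrival m})"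
    by linarith
  then show ?thesis by (rule that[OF arrival_nonneg m(2) m(5)])
qed

end

section \<open>Uniform limits and root-n rates\<close>

lemma uniform_limit_eventually_bounded:
  fixes F :: "'b \<Rightarrow> 'a::topological_space \<Rightarrow> real"
  assumes conv: "\<forall>\<epsilon>>0. eventually (\<lambda>n. \<forall>t\<in>S. \<bar>F n t - G t\<bar> \<le> \<epsilon>) net"
    and "compact S" "continuous_on S G"
  shows "\<exists>C. eventually (\<lambda>n. \<forall>t\<in>S. \<bar>F n t\<bar> \<le> C) net"
proof -
  obtain C where C: "\<And>t. t \<in> S \<Longrightarrow> \<bar>G t\<bar> \<le> C"
    using compact_imp_bounded[OF compact_continuous_image[OF assms(3,2)]]
    unfolding bounded_iff by auto
  have "eventually (\<lambda>n. \<forall>t\<in>S. \<bar>F n t - G t\<bar> \<le> 1) net" using conv by simp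
  then have "eventually (\<lambda>n. \<forall>t\<in>S. \<bar>F n t\<bar> \<le> C + 1) net"
    by (rule eventually_mono) (use C in force)
  then show ?thesis by blast
qed

lemma uniform_limit_eventually_equicontinuous:
  fixes F :: "'b \<Rightarrow> real \<Rightarrow> real"
  assumes conv: "\<forall>\<epsilon>>0. eventually (\<lambda>n. \<forall>t\<in>S. \<bar>F n t - G t\<bar> \<le> \<epsilon>) net"
    and "compact S" "continuous_on S G" "0 < \<epsilon>"
  shows "\<exists>\<delta>>0. eventually (\<lambda>n. \<forall>t\<in>S. \<forall>t'\<in>S. \<bar>t - t'\<bar> \<le> \<delta> \<longrightarrow> \<bar>F n t - F n t'\<bar> \<le> \<epsilon>) net"
proof -
  obtain d where "0 < d" and d: "\<And>t t'. t \<in> S \<Longrightarrow> t' \<in> S \<Longrightarrow> \<bar>t - t'\<bar> < d \<Longrightarrow> \<bar>G t - G t'\<bar> < \<epsilon> / 3"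
    using compact_uniformly_continuous[OF assms(3,2)] \<open>0 < \<epsilon>\<close>
    unfolding uniformly_continuous_on_def dist_real_def
    by (metis abs_minus_commute divide_pos_pos zero_less_numeral)
  have "eventually (\<lambda>n. \<forall>t\<in>S. \<bar>F n t - G t\<bar> \<le> \<epsilon> / 3) net"
    by (rule conv[rule_format]) (use \<open>0 < \<epsilon>\<close> in simp)
  then have "eventually (\<lambda>n. \<forall>t\<in>S. \<forall>t'\<in>S. \<bar>t - t'\<bar> \<le> d / 2 \<longrightarrow> \<bar>F n t - F n t'\<bar> \<le> \<epsilon>) net"
  proof (rule eventually_mono, intro ballI impI)
    fix n t t' assume F: "\<forall>t\<in>S. \<bar>F n t - G t\<bar> \<le> \<epsilon> / 3" and t: "t \<in> S" "t' \<in> S" "\<bar>t - t'\<bar> \<le> d / 2"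
    have "\<bar>G t - G t'\<bar> < \<epsilon> / 3" using d[OF t(1,2)] t(3) \<open>0 < d\<close> by simp
    moreover have "\<bar>F n t - G t\<bar> \<le> \<epsilon> / 3" "\<bar>F n t' - G t'\<bar> \<le> \<epsilon> / 3" using F t(1,2) by auto
    ultimately show "\<bar>F n t - F n t'\<bar> \<le> \<epsilon>" by linarith
  qed
  then show ?thesis using \<open>0 < d\<close> by (intro exI[of _ "d / 2"]) auto
qed

lemma eventually_bound_finite:
  fixes F :: "'i \<Rightarrow> 'b \<Rightarrow> 'c \<Rightarrow> real"
  assumes "finite I" "\<And>i. i \<in> I \<Longrightarrow> \<exists>C. eventually (\<lambda>n. \<forall>t\<in>S. \<bar>F i n t\<bar> \<le> C) net"
  shows "\<exists>C. eventually (\<lambda>n. \<forall>i\<in>I. \<forall>t\<in>S. \<bar>F i n t\<bar> \<le> C) net"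
  using assms
proof (induction I rule: finite_induct)
  case (insert i I)
  then obtain C1 C2 where "eventually (\<lambda>n. \<forall>t\<in>S. \<bar>F i n t\<bar> \<le> C1) net"
    and "eventually (\<lambda>n. \<forall>j\<in>I. \<forall>t\<in>S. \<bar>F j n t\<bar> \<le> C2) net"
    by blast
  then have "eventually (\<lambda>n. \<forall>j\<in>insert i I. \<forall>t\<in>S. \<bar>F j n t\<bar> \<le> max C1 C2) net"
    by eventually_elim (simp, meson max.coboundedI1 max.coboundedI2)
  then show ?case by blast
qed simp

lemma eventually_modulus_finite:
  fixes F :: "'i \<Rightarrow> 'b \<Rightarrow> real \<Rightarrow> real"
  assumes "finite I"
    "\<And>i. i \<in> I \<Longrightarrow> \<exists>\<delta>>0. eventually (\<lambda>n. \<forall>t\<in>S. \<forall>t'\<in>S. \<bar>t - t'\<bar> \<le> \<delta> \<longrightarrow> \<bar>F i n t - F i n t'\<bar> \<le> \<epsilon>) net"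
  shows "\<exists>\<delta>>0. eventually (\<lambda>n. \<forall>i\<in>I. \<forall>t\<in>S. \<forall>t'\<in>S. \<bar>t - t'\<bar> \<le> \<delta> \<longrightarrow> \<bar>F i n t - F i n t'\<bar> \<le> \<epsilon>) net"
  using assms
proof (induction I rule: finite_induct)
  case (insert i I)
  then obtain \<delta>1 \<delta>2 where "0 < \<delta>1" "0 < \<delta>2"
    and ev1: "eventually (\<lambda>n. \<forall>t\<in>S. \<forall>t'\<in>S. \<bar>t - t'\<bar> \<le> \<delta>1 \<longrightarrow> \<bar>F i n t - F i n t'\<bar> \<le> \<epsilon>) net"
    and ev2: "eventually (\<lambda>n. \<forall>j\<in>I. \<forall>t\<in>S. \<forall>t'\<in>S. \<bar>t - t'\<bar> \<le> \<delta>2 \<longrightarrow> \<bar>F j n t - F j n t'\<bar> \<le> \<epsilon>) net"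
    by blast
  from ev1 ev2 have "eventually (\<lambda>n. \<forall>j\<in>insert i I. \<forall>t\<in>S. \<forall>t'\<in>S.
      \<bar>t - t'\<bar> \<le> min \<delta>1 \<delta>2 \<longrightarrow> \<bar>F j n t - F j n t'\<bar> \<le> \<epsilon>) net"
    by eventually_elim auto
  with \<open>0 < \<delta>1\<close> \<open>0 < \<delta>2\<close> show ?case by (intro exI[of _ "min \<delta>1 \<delta>2"]) auto
qed (auto intro: exI[of _ 1])

lemma sqrt_at_top_sequentially: "filterlim (\<lambda>n::nat. sqrt (real n)) at_top sequentially"
  by (rule filterlim_compose[OF sqrt_at_top filterlim_real_sequentially])

lemma inverse_sqrt_tendsto_zero: "(\<lambda>n::nat. 1 / sqrt (real n)) \<longlonglongrightarrow> 0"
  using tendsto_inverse_0_at_top[OF sqrt_at_top_sequentially] by (simp add: inverse_eq_divide)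

lemma tendsto_of_sqrt_rate:
  assumes "(\<lambda>n. sqrt (real n) * (a n - (a0::real))) \<longlonglongrightarrow> 0"
  shows "a \<longlonglongrightarrow> a0"
proof -
  have "(\<lambda>n. sqrt (real n) * (a n - a0) * (1 / sqrt (real n))) \<longlonglongrightarrow> 0 * 0"
    by (intro tendsto_mult assms inverse_sqrt_tendsto_zero)
  moreover have "eventually (\<lambda>n. sqrt (real n) * (a n - a0) * (1 / sqrt (real n)) = a n - a0) sequentially"
    using eventually_gt_at_top[of 0] by eventually_elim simp
  ultimately have "(\<lambda>n. a n - a0) \<longlonglongrightarrow> 0" by (simp add: tendsto_cong)
  then show ?thesis by (rule LIM_zero_cancel)
qed

lemma sqrt_rate_mult:
  assumes a: "(\<lambda>n. sqrt (real n) * (a n - (a0::real))) \<longlonglongrightarrow> 0"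
    and b: "(\<lambda>n. sqrt (real n) * (b n - (b0::real))) \<longlonglongrightarrow> 0"
  shows "(\<lambda>n. sqrt (real n) * (a n * b n - a0 * b0)) \<longlonglongrightarrow> 0"
proof -
  have "(\<lambda>n. sqrt (real n) * (a n - a0) * b n + a0 * (sqrt (real n) * (b n - b0))) \<longlonglongrightarrow> 0 * b0 + a0 * 0"
    by (intro tendsto_intros a b tendsto_of_sqrt_rate[OF b])
  then show ?thesis by (simp add: algebra_simps)
qed

lemma sqrt_rate_sum:
  assumes "\<And>k. k \<in> I \<Longrightarrow> (\<lambda>n. sqrt (real n) * (a n k - (a0 k::real))) \<longlonglongrightarrow> 0"
  shows "(\<lambda>n. sqrt (real n) * ((\<Sum>k\<in>I. a n k) - (\<Sum>k\<in>I. a0 k))) \<longlonglongrightarrow> 0"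
proof -
  have "(\<lambda>n. \<Sum>k\<in>I. sqrt (real n) * (a n k - a0 k)) \<longlonglongrightarrow> 0"
    by (rule tendsto_null_sum) (use assms in auto)
  then show ?thesis by (simp add: sum_distrib_left sum_subtractf right_diff_distrib)
qed

lemma sqrt_rate_inverse:
  assumes a: "(\<lambda>n. sqrt (real n) * (a n - (a0::real))) \<longlonglongrightarrow> 0" and "a0 \<noteq> 0"
  shows "(\<lambda>n. sqrt (real n) * (1 / a n - 1 / a0)) \<longlonglongrightarrow> 0"
proof -
  have lim: "a \<longlonglongrightarrow> a0" by (rule tendsto_of_sqrt_rate[OF a])
  have "(\<lambda>n. - (sqrt (real n) * (a n - a0)) / (a n * a0)) \<longlonglongrightarrow> - 0 / (a0 * a0)"
    by (intro tendsto_intros a lim) (use \<open>a0 \<noteq> 0\<close> in simp)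
  moreover have "eventually (\<lambda>n. - (sqrt (real n) * (a n - a0)) / (a n * a0)
      = sqrt (real n) * (1 / a n - 1 / a0)) sequentially"
    using tendsto_imp_eventually_ne[OF lim \<open>a0 \<noteq> 0\<close>]
    by eventually_elim (use \<open>a0 \<noteq> 0\<close> in \<open>simp add: field_simps\<close>)
  ultimately show ?thesis by (simp add: tendsto_cong)
qed

lemma tendsto_eventually_abs_le: "(f \<longlongrightarrow> (a::real)) net \<Longrightarrow> eventually (\<lambda>x. \<bar>f x\<bar> \<le> \<bar>a\<bar> + 1) net"
  by (drule tendsto_rabs, drule order_tendstoD(2)[of _ _ _ "\<bar>a\<bar> + 1"]) (auto elim: eventually_mono)

lemma abs_mult_le_mult: "\<bar>a\<bar> \<le> A \<Longrightarrow> \<bar>b\<bar> \<le> B \<Longrightarrow> \<bar>a * b\<bar> \<le> A * (B::real)"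
  unfolding abs_mult by (rule mult_mono) auto

lemma abs_sub_mult_div_le:
  fixes x y \<rho> c :: real
  assumes "0 < c" "\<bar>x - \<rho> * y\<bar> \<le> \<epsilon> * c"
  shows "\<bar>x / c - \<rho> * (y / c)\<bar> \<le> \<epsilon>"
proof -
  have "x / c - \<rho> * (y / c) = (x - \<rho> * y) / c" by (simp add: diff_divide_distrib)
  then show ?thesis using assms by (simp add: abs_divide divide_le_eq)
qed

lemma abs_sub_mult_sum_le:
  fixes \<Delta> :: "nat \<Rightarrow> real"
  assumes "0 \<le> \<rho>" "\<rho> \<le> 1" "k < K" "\<And>r. r < K \<Longrightarrow> \<bar>\<Delta> r\<bar> \<le> e"
  shows "\<bar>\<Delta> k - \<rho> * (\<Sum>r<K. \<Delta> r)\<bar> \<le> (real K + 1) * e"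
proof -
  have "\<bar>\<rho> * (\<Sum>r<K. \<Delta> r)\<bar> \<le> 1 * (\<Sum>r<K. e)"
    using assms by (intro abs_mult_le_mult order_trans[OF sum_abs sum_mono]) auto
  then show ?thesis
    using assms(4)[OF assms(3)] abs_triangle_ineq4[of "\<Delta> k" "\<rho> * (\<Sum>r<K. \<Delta> r)"] by (simp add: algebra_simps)
qed

section \<open>Model parameters in heavy traffic\<close>

lemma p_n_nonneg: "0 \<le> p_n M Y n k"
  unfolding p_n_def by simp

lemma q_n_nonneg: "0 \<le> q_n M X Y f n k l"
  unfolding q_n_def p_n_def by simp

lemma sum_p_n_q_n:
  assumes "prob_space M" and Y: "Y n 0 \<in> M \<rightarrow>\<^sub>M count_space UNIV"
    and fX: "(\<lambda>w. f (X n 0 w)) \<in> borel_measurable M" and "\<And>x. f x < K"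
  shows "(\<Sum>l<K. p_n M Y n k * q_n M X Y f n k l) = p_n M Y n k"
proof -
  interpret prob_space M by fact
  define S where "S l = {w \<in> space M. Y n 0 w = k \<and> f (X n 0 w) = l}" for l
  have S_sets: "S l \<in> sets M" for l
  proof -
    have "S l = (Y n 0 -` {k} \<inter> space M) \<inter> ((\<lambda>w. f (X n 0 w)) -` {l} \<inter> space M)"
      unfolding S_def by auto
    then show ?thesis using measurable_sets[OF Y] measurable_sets[OF fX] by simp
  qed
  have "(\<Union>l<K. S l) = {w \<in> space M. Y n 0 w = k}" unfolding S_def using assms(4) by auto
  moreover have "measure M (\<Union>l<K. S l) = (\<Sum>l<K. measure M (S l))"
    by (rule measure_finite_Union) (use S_sets in \<open>auto simp: disjoint_family_on_def S_def emeasure_eq_measure\<close>)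
  ultimately have "(\<Sum>l<K. measure M (S l)) = p_n M Y n k"
    unfolding p_n_def by simp
  \<comment> \<open>if \<open>p_n = 0\<close> then every \<open>q_n\<close> is a division by zero, hence 0, and both sides vanish\<close>
  then show ?thesis
    unfolding q_n_def S_def by (cases "p_n M Y n k = 0") (simp_all flip: sum_divide_distrib)
qed

lemma indep_vars_measurable_components:
  assumes "prob_space M"
    and "prob_space.indep_vars M (\<lambda>_. borel \<Otimes>\<^sub>M borel \<Otimes>\<^sub>M borel \<Otimes>\<^sub>M count_space UNIV)
      (\<lambda>i w. (u i w, v i w, X i w, Y i w)) UNIV"
  shows "Y i \<in> M \<rightarrow>\<^sub>M count_space UNIV" "(X i :: _ \<Rightarrow> 'x::topological_space) \<in> borel_measurable M"
proof -
  have joint: "(\<lambda>w. (u i w, v i w, X i w, Y i w))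
      \<in> M \<rightarrow>\<^sub>M borel \<Otimes>\<^sub>M borel \<Otimes>\<^sub>M (borel :: 'x measure) \<Otimes>\<^sub>M count_space UNIV"
    using assms unfolding prob_space.indep_vars_def[OF assms(1)] by blast
  have "(\<lambda>w. snd (snd (snd (u i w, v i w, X i w, Y i w)))) \<in> M \<rightarrow>\<^sub>M count_space UNIV"
    by (rule measurable_compose[OF joint]) measurable
  then show "Y i \<in> M \<rightarrow>\<^sub>M count_space UNIV" by simp
  have "(\<lambda>w. fst (snd (snd (u i w, v i w, X i w, Y i w)))) \<in> borel_measurable M"
    by (rule measurable_compose[OF joint]) measurable
  then show "X i \<in> borel_measurable M" by simp
qed

locale heavy_traffic =
  fixes M :: "'w measure" and K :: nat and u v :: "nat \<Rightarrow> nat \<Rightarrow> 'w \<Rightarrow> real"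
    and X :: "nat \<Rightarrow> nat \<Rightarrow> 'w \<Rightarrow> 'x" and Y :: "nat \<Rightarrow> nat \<Rightarrow> 'w \<Rightarrow> nat" and f :: "'x \<Rightarrow> nat"
    and p :: "nat \<Rightarrow> real" and q :: "nat \<Rightarrow> nat \<Rightarrow> real" and lam :: real and mu :: "nat \<Rightarrow> real"
  assumes prediction_less: "\<And>x. f x < K"
    and prediction_probs_sum:
      "\<And>n k. 1 \<le> n \<Longrightarrow> k < K \<Longrightarrow> (\<Sum>l<K. p_n M Y n k * q_n M X Y f n k l) = p_n M Y n k"
    and p_nonneg: "\<And>k. k < K \<Longrightarrow> 0 \<le> p k"
    and q_nonneg: "\<And>k l. k < K \<Longrightarrow> l < K \<Longrightarrow> 0 \<le> q k l"
    and mu_pos: "\<And>k. k < K \<Longrightarrow> 0 < mu k" and lam_pos: "0 < lam"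
    and predicted_class_prob_pos: "\<And>l. l < K \<Longrightarrow> 0 < (\<Sum>k<K. p k * q k l)"
    and critical_load: "lam * (\<Sum>k<K. p k / mu k) = 1"
    and lam_rate: "(\<lambda>n. sqrt (real n) * (lam_n M u n - lam)) \<longlonglongrightarrow> 0"
    and mu_rate: "\<And>k. k < K \<Longrightarrow> (\<lambda>n. sqrt (real n) * (mu_n M v Y n k - mu k)) \<longlonglongrightarrow> 0"
    and p_rate: "\<And>k. k < K \<Longrightarrow> (\<lambda>n. sqrt (real n) * (p_n M Y n k - p k)) \<longlonglongrightarrow> 0"
    and q_tendsto: "\<And>k l. k < K \<Longrightarrow> l < K \<Longrightarrow> (\<lambda>n. q_n M X Y f n k l) \<longlonglongrightarrow> q k l"
begin

abbreviation "lamn n \<equiv> lam_n M u n"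
abbreviation "pn n k \<equiv> p_n M Y n k"
abbreviation "qn n k l \<equiv> q_n M X Y f n k l"
abbreviation "mean_service n k \<equiv> 1 / mu_n M v Y n k"

definition class_work_rate :: "nat \<Rightarrow> nat \<Rightarrow> real" where
  "class_work_rate n l = (\<Sum>k<K. mean_service n k * (pn n k * qn n k l))"

definition class_share :: "nat \<Rightarrow> nat \<Rightarrow> nat \<Rightarrow> real" where
  "class_share n k l = pn n k * qn n k l / (\<Sum>r<K. pn n r * qn n r l)"

lemma lam_n_tendsto: "lamn \<longlonglongrightarrow> lam"
  by (rule tendsto_of_sqrt_rate[OF lam_rate])

lemma mean_service_rate: "k < K \<Longrightarrow> (\<lambda>n. sqrt (real n) * (mean_service n k - 1 / mu k)) \<longlonglongrightarrow> 0"
  using sqrt_rate_inverse[OF mu_rate] mu_pos by fastforce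

lemma mean_service_tendsto: "k < K \<Longrightarrow> (\<lambda>n. mean_service n k) \<longlonglongrightarrow> 1 / mu k"
  by (rule tendsto_of_sqrt_rate[OF mean_service_rate])

lemma p_n_tendsto: "k < K \<Longrightarrow> (\<lambda>n. pn n k) \<longlonglongrightarrow> p k"
  by (rule tendsto_of_sqrt_rate[OF p_rate])

lemma load_rate: "(\<lambda>n. sqrt (real n) * (lamn n * (\<Sum>k<K. pn n k * mean_service n k) - 1)) \<longlonglongrightarrow> 0"
proof -
  have "(\<lambda>n. sqrt (real n) * ((\<Sum>k<K. pn n k * mean_service n k) - (\<Sum>k<K. p k * (1 / mu k)))) \<longlonglongrightarrow> 0"
    by (intro sqrt_rate_sum sqrt_rate_mult p_rate mean_service_rate) auto
  then have "(\<lambda>n. sqrt (real n) * (lamn n * (\<Sum>k<K. pn n k * mean_service n k)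
      - lam * (\<Sum>k<K. p k * (1 / mu k)))) \<longlonglongrightarrow> 0"
    by (rule sqrt_rate_mult[OF lam_rate])
  then show ?thesis using critical_load by simp
qed

lemma class_work_rate_pos:
  assumes "l < K"
  obtains c where "0 < c" "eventually (\<lambda>n. c \<le> lamn n * class_work_rate n l) sequentially"
proof -
  define L where "L = lam * (\<Sum>k<K. 1 / mu k * (p k * q k l))"
  obtain k where k: "k < K" "0 < p k * q k l"
    using predicted_class_prob_pos[OF assms] sum_nonpos[of "{..<K}" "\<lambda>k. p k * q k l"]
    by (meson lessThan_iff not_le)
  have "0 < (\<Sum>k<K. 1 / mu k * (p k * q k l))"
    using k mu_pos p_nonneg q_nonneg assms
    by (intro sum_pos2[of _ k]) (auto intro!: divide_nonneg_pos mult_nonneg_nonneg)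
  then have "0 < L" unfolding L_def using lam_pos by simp
  have "(\<lambda>n. lamn n * class_work_rate n l) \<longlonglongrightarrow> L"
    unfolding class_work_rate_def L_def using assms
    by (intro tendsto_intros lam_n_tendsto mean_service_tendsto p_n_tendsto q_tendsto) auto
  then have "eventually (\<lambda>n. L / 2 < lamn n * class_work_rate n l) sequentially"
    by (rule order_tendstoD(1)) (use \<open>0 < L\<close> in simp)
  then have "eventually (\<lambda>n. L / 2 \<le> lamn n * class_work_rate n l) sequentially"
    by (rule eventually_mono) simp
  then show ?thesis by (rule that[rotated]) (use \<open>0 < L\<close> in simp)
qed

lemma class_share_denominator_pos: "l < K \<Longrightarrow> eventually (\<lambda>n. 0 < (\<Sum>k<K. pn n k * qn n k l)) sequentially"
  using predicted_class_prob_pos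
  by (intro order_tendstoD(1)[of _ "\<Sum>k<K. p k * q k l"] tendsto_intros p_n_tendsto q_tendsto) auto

lemma class_share_nonneg: "0 \<le> class_share n k l"
  unfolding class_share_def by (intro divide_nonneg_nonneg sum_nonneg mult_nonneg_nonneg p_n_nonneg q_n_nonneg)

lemma class_share_le_one:
  assumes "k < K"
  shows "class_share n k l \<le> 1"
proof -
  have "pn n k * qn n k l \<le> (\<Sum>r<K. pn n r * qn n r l)"
    using assms by (intro member_le_sum mult_nonneg_nonneg p_n_nonneg q_n_nonneg) auto
  moreover have "0 \<le> pn n k * qn n k l" by (intro mult_nonneg_nonneg p_n_nonneg q_n_nonneg)
  ultimately show ?thesis unfolding class_share_def by (simp add: divide_le_eq_1 less_le)
qed

lemma sum_class_work_rate:
  assumes "1 \<le> n"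
  shows "(\<Sum>l<K. class_work_rate n l) = (\<Sum>k<K. pn n k * mean_service n k)"
proof -
  have "(\<Sum>l<K. class_work_rate n l) = (\<Sum>k<K. \<Sum>l<K. mean_service n k * (pn n k * qn n k l))"
    unfolding class_work_rate_def by (rule sum.swap)
  also have "\<dots> = (\<Sum>k<K. mean_service n k * (\<Sum>l<K. pn n k * qn n k l))"
    by (simp add: sum_distrib_left)
  also have "\<dots> = (\<Sum>k<K. mean_service n k * pn n k)"
    using prediction_probs_sum[OF assms] by simp
  finally show ?thesis by (simp add: mult.commute)
qed

lemma class_share_mult_denominator:
  "0 < (\<Sum>r<K. pn n r * qn n r l) \<Longrightarrow> class_share n k l * (\<Sum>r<K. pn n r * qn n r l) = pn n k * qn n k l"
  unfolding class_share_def by simp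

end

section \<open>Diffusion scaling along one sample path\<close>

lemma finite_Prim: "finite (Prim K)"
proof -
  have "Prim K \<subseteq> insert PA ((\<lambda>(k, l). PC k l) ` ({..<K} \<times> {..<K}) \<union> (\<lambda>(k, l). PV k l) ` ({..<K} \<times> {..<K}))"
    unfolding Prim_def by auto
  then show ?thesis by (rule finite_subset) auto
qed

lemma Prim_memI: "PA \<in> Prim K" "k < K \<Longrightarrow> l < K \<Longrightarrow> PC k l \<in> Prim K" "k < K \<Longrightarrow> l < K \<Longrightarrow> PV k l \<in> Prim K"
  unfolding Prim_def by auto

locale heavy_traffic_path = heavy_traffic M K u v X Y f p q lam mu
  for M :: "'w measure" and K u v X Y f p q lam mu +
  fixes c :: "nat \<Rightarrow> 'w \<Rightarrow> real \<Rightarrow> nat option" and w :: 'w and B :: "real \<Rightarrow> 'w \<Rightarrow> prim \<Rightarrow> real"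
  assumes system_model: "\<And>n i. 1 \<le> n \<Longrightarrow> 0 \<le> u n i w \<and> 0 < v n i w \<and> Y n i w < K"
    and system_policy: "\<And>n. 1 \<le> n \<Longrightarrow>
      wc_pfcfs_policy K (real n) (\<lambda>i. u n i w) (\<lambda>i. v n i w) (\<lambda>i. Y n i w) (\<lambda>i. f (X n i w)) (c n w)"
    and prim_conv: "\<And>i \<epsilon>. i \<in> Prim K \<Longrightarrow> 0 < \<epsilon> \<Longrightarrow>
      eventually (\<lambda>n. \<forall>t\<in>{0..1}. \<bar>prim_hat M u v X Y f n w t i - B t w i\<bar> \<le> \<epsilon>) sequentially"
    and limit_continuous: "\<And>i. i \<in> Prim K \<Longrightarrow> continuous_on {0..1} (\<lambda>t. B t w i)"
    and limit_arrivals_zero: "B 0 w PA = 0"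
begin

abbreviation "Ph n t i \<equiv> prim_hat M u v X Y f n w t i"
abbreviation "arrivals_n n \<equiv> A0 (\<lambda>i. u n i w)"
abbreviation "class_work_n n \<equiv> arrived_work (\<lambda>i. u n i w) (\<lambda>i. v n i w) (\<lambda>i. f (X n i w))"
abbreviation "total_work_n n \<equiv> total_work K (\<lambda>i. u n i w) (\<lambda>i. v n i w) (\<lambda>i. f (X n i w))"
abbreviation "workload_n n s \<equiv> total_work_n n s - total_alloc K (c n w) s"
abbreviation "Nkl_n n k l s \<equiv> Nkl (\<lambda>i. u n i w) (\<lambda>i. v n i w) (\<lambda>i. Y n i w) (\<lambda>i. f (X n i w)) (c n w) k l s"
abbreviation "Nl_n n l s \<equiv> Nl K (\<lambda>i. u n i w) (\<lambda>i. v n i w) (\<lambda>i. Y n i w) (\<lambda>i. f (X n i w)) (c n w) l s"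
abbreviation "batch_n n T \<equiv> card {i. arrival_time (\<lambda>i. u n i w) i = T}"
abbreviation "imbalance_n n k l m \<equiv> count_imbalance K (\<lambda>i. Y n i w) (\<lambda>i. f (X n i w)) k l (class_share n k l) m"

lemma A0_eq_scaled:
  "1 \<le> n \<Longrightarrow> real (arrivals_n n r) = sqrt (real n) * Ph n (r / real n) PA + lamn n * r"
  unfolding prim_hat_def Let_def by simp

lemma class_count_eq_scaled:
  "1 \<le> n \<Longrightarrow> real (class_count (\<lambda>i. Y n i w) (\<lambda>i. f (X n i w)) k l (arrivals_n n r))
    = sqrt (real n) * Ph n (r / real n) (PC k l) + pn n k * qn n k l * real (arrivals_n n r)"
  unfolding prim_hat_def Let_def class_count_def by simp

lemma class_service_eq_scaled:
  "1 \<le> n \<Longrightarrow> (\<Sum>j | j < arrivals_n n r \<and> Y n j w = k \<and> f (X n j w) = l. v n j w)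
    = sqrt (real n) * Ph n (r / real n) (PV k l)
      + mean_service n k * real (class_count (\<lambda>i. Y n i w) (\<lambda>i. f (X n i w)) k l (arrivals_n n r))"
  unfolding prim_hat_def Let_def class_count_def by (simp add: sum_subtractf)

definition scaled_pair_work :: "nat \<Rightarrow> nat \<Rightarrow> nat \<Rightarrow> real \<Rightarrow> real" where
  "scaled_pair_work n k l \<tau> = Ph n \<tau> (PV k l) + mean_service n k * Ph n \<tau> (PC k l)
     + mean_service n k * (pn n k * qn n k l) * Ph n \<tau> PA"

definition scaled_class_work :: "nat \<Rightarrow> nat \<Rightarrow> real \<Rightarrow> real" where
  "scaled_class_work n l \<tau> = (\<Sum>k<K. scaled_pair_work n k l \<tau>)"

lemma arrived_work_eq_scaled:
  assumes "1 \<le> n"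
  shows "arrived_work (\<lambda>i. u n i w) (\<lambda>i. v n i w) (\<lambda>i. f (X n i w)) l x
    = sqrt (real n) * scaled_class_work n l (x / real n) + lamn n * x * class_work_rate n l"
proof -
  let ?S = "{j. j < arrivals_n n x \<and> f (X n j w) = l}"
  have "(\<lambda>j. Y n j w) ` ?S \<subseteq> {..<K}" using system_model[OF assms] by auto
  then have "arrived_work (\<lambda>i. u n i w) (\<lambda>i. v n i w) (\<lambda>i. f (X n i w)) l x
      = (\<Sum>k<K. \<Sum>j | j \<in> ?S \<and> Y n j w = k. v n j w)"
    unfolding arrived_work_def by (intro sum.group[symmetric]) auto
  also have "\<dots> = (\<Sum>k<K. \<Sum>j | j < arrivals_n n x \<and> Y n j w = k \<and> f (X n j w) = l. v n j w)"
    by (intro sum.cong refl arg_cong[where f = "\<lambda>S. sum _ S"]) auto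
  also have "\<dots> = sqrt (real n) * scaled_class_work n l (x / real n) + lamn n * x * class_work_rate n l"
    unfolding class_service_eq_scaled[OF assms] class_count_eq_scaled[OF assms] A0_eq_scaled[OF assms]
      scaled_class_work_def scaled_pair_work_def class_work_rate_def
    by (simp add: sum_distrib_left sum_distrib_right sum.distrib algebra_simps)
  finally show ?thesis .
qed

lemma prim_bounded: "\<exists>C. eventually (\<lambda>n. \<forall>i\<in>Prim K. \<forall>t\<in>{0..1}. \<bar>Ph n t i\<bar> \<le> C) sequentially"
proof (rule eventually_bound_finite[OF finite_Prim, where F = "\<lambda>i n t. Ph n t i"])
  fix i assume "i \<in> Prim K"
  then show "\<exists>C. eventually (\<lambda>n. \<forall>t\<in>{0..1}. \<bar>Ph n t i\<bar> \<le> C) sequentially"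
    using prim_conv limit_continuous
    by (intro uniform_limit_eventually_bounded[where G = "\<lambda>t. B t w i"]) auto
qed

lemma prim_equicontinuous:
  assumes "0 < \<epsilon>"
  shows "\<exists>\<delta>>0. eventually (\<lambda>n. \<forall>i\<in>Prim K. \<forall>t\<in>{0..1}. \<forall>t'\<in>{0..1}.
    \<bar>t - t'\<bar> \<le> \<delta> \<longrightarrow> \<bar>Ph n t i - Ph n t' i\<bar> \<le> \<epsilon>) sequentially"
proof (rule eventually_modulus_finite[OF finite_Prim, where F = "\<lambda>i n t. Ph n t i"])
  fix i assume "i \<in> Prim K"
  then show "\<exists>\<delta>>0. eventually (\<lambda>n. \<forall>t\<in>{0..1}. \<forall>t'\<in>{0..1}.
      \<bar>t - t'\<bar> \<le> \<delta> \<longrightarrow> \<bar>Ph n t i - Ph n t' i\<bar> \<le> \<epsilon>) sequentially"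
    using prim_conv limit_continuous assms
    by (intro uniform_limit_eventually_equicontinuous[where G = "\<lambda>t. B t w i"]) auto
qed

lemma scaled_pair_work_bounded:
  assumes "k < K" "l < K"
  shows "\<exists>C. eventually (\<lambda>n. \<forall>\<tau>\<in>{0..1}. \<bar>scaled_pair_work n k l \<tau>\<bar> \<le> C) sequentially"
proof -
  obtain C where C: "eventually (\<lambda>n. \<forall>i\<in>Prim K. \<forall>t\<in>{0..1}. \<bar>Ph n t i\<bar> \<le> C) sequentially"
    using prim_bounded by blast
  define E where "E = \<bar>1 / mu k\<bar> + 1"
  define P where "P = \<bar>p k * q k l\<bar> + 1"
  have "eventually (\<lambda>n. \<bar>mean_service n k\<bar> \<le> E) sequentially"
    unfolding E_def by (rule tendsto_eventually_abs_le[OF mean_service_tendsto[OF assms(1)]])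
  moreover have "eventually (\<lambda>n. \<bar>pn n k * qn n k l\<bar> \<le> P) sequentially"
    unfolding P_def using assms by (intro tendsto_eventually_abs_le tendsto_mult p_n_tendsto q_tendsto)
  ultimately have "eventually (\<lambda>n. \<forall>\<tau>\<in>{0..1}. \<bar>scaled_pair_work n k l \<tau>\<bar> \<le> C + E * C + E * P * C) sequentially"
    using C
  proof eventually_elim
    case (elim n)
    show ?case
    proof
      fix \<tau> :: real assume "\<tau> \<in> {0..1}"
      then have V: "\<bar>Ph n \<tau> (PV k l)\<bar> \<le> C" and PC: "\<bar>Ph n \<tau> (PC k l)\<bar> \<le> C"
        and PA: "\<bar>Ph n \<tau> PA\<bar> \<le> C"
        using elim(3) Prim_memI assms by auto
      have "\<bar>mean_service n k * Ph n \<tau> (PC k l)\<bar> \<le> E * C"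
        by (rule abs_mult_le_mult[OF elim(1) PC])
      moreover have "\<bar>mean_service n k * (pn n k * qn n k l) * Ph n \<tau> PA\<bar> \<le> E * P * C"
        by (rule abs_mult_le_mult[OF abs_mult_le_mult[OF elim(1,2)] PA])
      ultimately show "\<bar>scaled_pair_work n k l \<tau>\<bar> \<le> C + E * C + E * P * C"
        unfolding scaled_pair_work_def using V
          abs_triangle_ineq[of "Ph n \<tau> (PV k l) + mean_service n k * Ph n \<tau> (PC k l)"
            "mean_service n k * (pn n k * qn n k l) * Ph n \<tau> PA"]
          abs_triangle_ineq[of "Ph n \<tau> (PV k l)" "mean_service n k * Ph n \<tau> (PC k l)"]
        by linarith
    qed
  qed
  then show ?thesis by blast
qed

lemma scaled_class_work_bounded:
  "\<exists>C. eventually (\<lambda>n. \<forall>l<K. \<forall>\<tau>\<in>{0..1}. \<bar>scaled_class_work n l \<tau>\<bar> \<le> C) sequentially"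
proof -
  obtain C where C: "eventually (\<lambda>n. \<forall>(k, l)\<in>{..<K} \<times> {..<K}. \<forall>\<tau>\<in>{0..1}.
      \<bar>scaled_pair_work n k l \<tau>\<bar> \<le> C) sequentially"
    using eventually_bound_finite[of "{..<K} \<times> {..<K}" "{0..1}" "\<lambda>(k, l) n \<tau>. scaled_pair_work n k l \<tau>"]
      scaled_pair_work_bounded by fastforce
  have "eventually (\<lambda>n. \<forall>l<K. \<forall>\<tau>\<in>{0..1}. \<bar>scaled_class_work n l \<tau>\<bar> \<le> real K * C) sequentially"
    using C
  proof (rule eventually_mono, intro allI impI ballI)
    fix n l and \<tau> :: real
    assume bound: "\<forall>(k, l)\<in>{..<K} \<times> {..<K}. \<forall>\<tau>\<in>{0..1}. \<bar>scaled_pair_work n k l \<tau>\<bar> \<le> C"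
      and "l < K" "\<tau> \<in> {0..1}"
    have "\<bar>scaled_class_work n l \<tau>\<bar> \<le> (\<Sum>k<K. \<bar>scaled_pair_work n k l \<tau>\<bar>)"
      unfolding scaled_class_work_def by (rule sum_abs)
    also have "\<dots> \<le> (\<Sum>k<K. C)" using bound \<open>l < K\<close> \<open>\<tau> \<in> {0..1}\<close> by (intro sum_mono) auto
    finally show "\<bar>scaled_class_work n l \<tau>\<bar> \<le> real K * C" by simp
  qed
  then show ?thesis by blast
qed

lemma horizon_eventually_reached: "eventually (\<lambda>n. \<exists>m. real n < (\<Sum>i<m. u n i w)) sequentially"
proof -
  obtain C where C: "eventually (\<lambda>n. \<bar>Ph n 1 PA\<bar> \<le> C) sequentially"
    using prim_bounded Prim_memI(1) by (fastforce elim: eventually_mono)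
  \<comment> \<open>otherwise \<open>A0\<close> is the junk value \<open>GREATEST m. True\<close>, a constant, so \<open>Ph n 1 PA\<close> tends to \<open>-\<infinity>\<close>\<close>
  define c0 where "c0 = real (GREATEST m::nat. True)"
  have "filterlim (\<lambda>n. - c0 * (1 / sqrt (real n)) + lamn n * sqrt (real n)) at_top sequentially"
  proof (rule filterlim_tendsto_add_at_top)
    show "(\<lambda>n. - c0 * (1 / sqrt (real n))) \<longlonglongrightarrow> - c0 * 0"
      by (intro tendsto_mult tendsto_const inverse_sqrt_tendsto_zero)
    show "filterlim (\<lambda>n. lamn n * sqrt (real n)) at_top sequentially"
      by (rule filterlim_tendsto_pos_mult_at_top[OF lam_n_tendsto lam_pos sqrt_at_top_sequentially])
  qed
  then have "eventually (\<lambda>n. C + 1 \<le> - c0 * (1 / sqrt (real n)) + lamn n * sqrt (real n)) sequentially"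
    unfolding filterlim_at_top by blast
  with C eventually_ge_at_top[of 1] show ?thesis
  proof eventually_elim
    case (elim n)
    show ?case
    proof (rule ccontr)
      assume "\<not> (\<exists>m. real n < (\<Sum>i<m. u n i w))"
      then have "arrivals_n n (real n * 1) = (GREATEST m::nat. True)"
        unfolding A0_def by (simp add: not_less)
      then have "Ph n 1 PA = (c0 - lamn n * real n) / sqrt (real n)"
        unfolding prim_hat_def Let_def c0_def by simp
      also have "\<dots> = c0 * (1 / sqrt (real n)) - lamn n * (real n / sqrt (real n))"
        by (simp add: diff_divide_distrib)
      also have "\<dots> = c0 * (1 / sqrt (real n)) - lamn n * sqrt (real n)"
        by (simp add: real_div_sqrt)
      finally have "Ph n 1 PA = c0 * (1 / sqrt (real n)) - lamn n * sqrt (real n)" .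
      with elim(1,3) show False by linarith
    qed
  qed
qed

lemma system_eventually:
  "eventually (\<lambda>n. 1 \<le> n \<and>
    wc_pfcfs_path K (real n) (\<lambda>i. u n i w) (\<lambda>i. v n i w) (\<lambda>i. Y n i w) (\<lambda>i. f (X n i w)) (c n w)) sequentially"
  using horizon_eventually_reached eventually_ge_at_top[of 1]
  by eventually_elim (simp add: wc_pfcfs_path_def system_model system_policy prediction_less)

lemma netput_eq_scaled:
  assumes "1 \<le> n"
  shows "total_work_n n x - x = sqrt (real n) * (\<Sum>l<K. scaled_class_work n l (x / real n))
    + x * (lamn n * (\<Sum>k<K. pn n k * mean_service n k) - 1)"
  unfolding total_work_def arrived_work_eq_scaled[OF assms] sum_class_work_rate[OF assms, symmetric]
  by (simp add: sum.distrib sum_distrib_left sum_distrib_right algebra_simps)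

lemma netput_bounded:
  "\<exists>C. eventually (\<lambda>n. \<forall>x\<in>{0..real n}. \<bar>total_work_n n x - x\<bar> \<le> C * sqrt (real n)) sequentially"
proof -
  obtain CQ where CQ: "eventually (\<lambda>n. \<forall>l<K. \<forall>\<tau>\<in>{0..1}. \<bar>scaled_class_work n l \<tau>\<bar> \<le> CQ) sequentially"
    using scaled_class_work_bounded by blast
  have rate: "eventually (\<lambda>n. \<bar>sqrt (real n) * (lamn n * (\<Sum>k<K. pn n k * mean_service n k) - 1)\<bar> < 1)
      sequentially"
    using tendsto_rabs[OF load_rate] by (rule order_tendstoD) simp
  from CQ rate eventually_ge_at_top[of 1]
  have "eventually (\<lambda>n. \<forall>x\<in>{0..real n}. \<bar>total_work_n n x - x\<bar> \<le> (real K * CQ + 1) * sqrt (real n)) sequentially"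
  proof eventually_elim
    case (elim n)
    show ?case
    proof
      fix x assume x: "x \<in> {0..real n}"
      define S where "S = (\<Sum>l<K. scaled_class_work n l (x / real n))"
      define R where "R = lamn n * (\<Sum>k<K. pn n k * mean_service n k) - 1"
      have "x / real n \<in> {0..1}" using x elim(3) by auto
      then have "(\<Sum>l<K. \<bar>scaled_class_work n l (x / real n)\<bar>) \<le> (\<Sum>l<K. CQ)"
        using elim(1) by (intro sum_mono) auto
      then have "\<bar>S\<bar> \<le> real K * CQ" unfolding S_def by (simp add: order_trans[OF sum_abs])
      then have "\<bar>sqrt (real n) * S\<bar> \<le> sqrt (real n) * (real K * CQ)" by (simp add: abs_mult mult_left_mono)
      moreover have "\<bar>x * R\<bar> \<le> sqrt (real n) * \<bar>sqrt (real n) * R\<bar>"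
        using x by (simp add: abs_mult mult.assoc[symmetric] mult_right_mono)
      moreover have "sqrt (real n) * \<bar>sqrt (real n) * R\<bar> \<le> sqrt (real n)"
        using elim(2) unfolding R_def by (simp add: mult_left_le)
      ultimately show "\<bar>total_work_n n x - x\<bar> \<le> (real K * CQ + 1) * sqrt (real n)"
        unfolding netput_eq_scaled[OF elim(3)] S_def[symmetric] R_def[symmetric]
        using abs_triangle_ineq[of "sqrt (real n) * S" "x * R"] by (simp add: algebra_simps)
    qed
  qed
  then show ?thesis by blast
qed

lemma workload_bounded:
  "\<exists>C. eventually (\<lambda>n. \<forall>s\<in>{0..real n}. workload_n n s \<le> C * sqrt (real n)) sequentially"
proof -
  obtain C where C: "eventually (\<lambda>n. \<forall>x\<in>{0..real n}. \<bar>total_work_n n x - x\<bar> \<le> C * sqrt (real n))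
      sequentially"
    using netput_bounded by blast
  from C system_eventually
  have "eventually (\<lambda>n. \<forall>s\<in>{0..real n}. workload_n n s \<le> (2 * C + 1) * sqrt (real n)) sequentially"
  proof eventually_elim
    case (elim n)
    then interpret wc_pfcfs_path K "real n" "\<lambda>i. u n i w" "\<lambda>i. v n i w" "\<lambda>i. Y n i w" "\<lambda>i. f (X n i w)" "c n w"
      by simp
    show ?case
    proof
      fix s assume s: "s \<in> {0..real n}"
      then obtain r where "0 \<le> r" "r \<le> s"
        "workload_n n s \<le> \<bar>total_work_n n s - s\<bar> + \<bar>total_work_n n r - r\<bar> + 1"
        using workload_le_netput by auto
      moreover have "\<bar>total_work_n n s - s\<bar> \<le> C * sqrt (real n)" "\<bar>total_work_n n r - r\<bar> \<le> C * sqrt (real n)"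
        using elim(1) s \<open>0 \<le> r\<close> \<open>r \<le> s\<close> by auto
      moreover have "1 \<le> sqrt (real n)" using elim(2) by simp
      ultimately have "workload_n n s \<le> 2 * (C * sqrt (real n)) + sqrt (real n)" by linarith
      then show "workload_n n s \<le> (2 * C + 1) * sqrt (real n)" by (simp add: algebra_simps)
    qed
  qed
  then show ?thesis by blast
qed

lemma class_work_increment_ge:
  assumes "l < K"
  obtains C where "eventually (\<lambda>n. \<forall>T s. 0 \<le> T \<longrightarrow> T \<le> s \<longrightarrow> s \<le> real n \<longrightarrow>
    lamn n * class_work_rate n l * (s - T) - C * sqrt (real n) \<le> class_work_n n l s - class_work_n n l T)
    sequentially"
proof -
  obtain CQ where CQ: "eventually (\<lambda>n. \<forall>l<K. \<forall>\<tau>\<in>{0..1}. \<bar>scaled_class_work n l \<tau>\<bar> \<le> CQ) sequentially"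
    using scaled_class_work_bounded by blast
  from CQ eventually_ge_at_top[of 1]
  have "eventually (\<lambda>n. \<forall>T s. 0 \<le> T \<longrightarrow> T \<le> s \<longrightarrow> s \<le> real n \<longrightarrow>
    lamn n * class_work_rate n l * (s - T) - 2 * CQ * sqrt (real n) \<le> class_work_n n l s - class_work_n n l T)
    sequentially"
  proof eventually_elim
    case (elim n)
    show ?case
    proof (intro allI impI)
      fix T s assume Ts: "0 \<le> T" "T \<le> s" "s \<le> real n"
      define a where "a = scaled_class_work n l (s / real n) - scaled_class_work n l (T / real n)"
      have "T / real n \<in> {0..1}" "s / real n \<in> {0..1}" using Ts elim(2) by auto
      then have "\<bar>scaled_class_work n l (s / real n)\<bar> \<le> CQ" "\<bar>scaled_class_work n l (T / real n)\<bar> \<le> CQ"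
        using elim(1) assms by auto
      then have "\<bar>a\<bar> \<le> 2 * CQ" unfolding a_def by (simp add: abs_le_iff)
      then have "- (sqrt (real n) * a) \<le> sqrt (real n) * (2 * CQ)"
        by (intro abs_le_D2 abs_mult_le_mult) auto
      moreover have "class_work_n n l s - class_work_n n l T
          = sqrt (real n) * a + lamn n * class_work_rate n l * (s - T)"
        unfolding a_def arrived_work_eq_scaled[OF elim(2)] by (simp add: algebra_simps)
      ultimately show "lamn n * class_work_rate n l * (s - T) - 2 * CQ * sqrt (real n)
          \<le> class_work_n n l s - class_work_n n l T"
        by (simp add: algebra_simps)
    qed
  qed
  then show ?thesis by (rule that)
qed

lemma window_small_if_class_work_small:
  assumes "l < K" "0 < \<delta>"
  shows "eventually (\<lambda>n. \<forall>T s. 0 \<le> T \<longrightarrow> T \<le> s \<longrightarrow> s \<le> real n \<longrightarrow>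
    class_work_n n l s - class_work_n n l T \<le> C * sqrt (real n) \<longrightarrow> s - T \<le> \<delta> * real n) sequentially"
proof -
  obtain r where "0 < r" and rate: "eventually (\<lambda>n. r \<le> lamn n * class_work_rate n l) sequentially"
    using class_work_rate_pos[OF assms(1)] by blast
  obtain C' where increment: "eventually (\<lambda>n. \<forall>T s. 0 \<le> T \<longrightarrow> T \<le> s \<longrightarrow> s \<le> real n \<longrightarrow>
      lamn n * class_work_rate n l * (s - T) - C' * sqrt (real n) \<le> class_work_n n l s - class_work_n n l T)
      sequentially"
    using class_work_increment_ge[OF assms(1)] by blast
  have large: "eventually (\<lambda>n. (C + C') / (r * \<delta>) \<le> sqrt (real n)) sequentially"
    using sqrt_at_top_sequentially unfolding filterlim_at_top by blast
  from rate increment large show ?thesis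
  proof eventually_elim
    case (elim n)
    show ?case
    proof (intro allI impI)
      fix T s assume Ts: "0 \<le> T" "T \<le> s" "s \<le> real n"
        and "class_work_n n l s - class_work_n n l T \<le> C * sqrt (real n)"
      moreover have "r * (s - T) \<le> lamn n * class_work_rate n l * (s - T)"
        using elim(1) Ts by (intro mult_right_mono) auto
      ultimately have "r * (s - T) \<le> (C + C') * sqrt (real n)"
        using elim(2) by (fastforce simp: algebra_simps)
      also have "\<dots> \<le> r * \<delta> * sqrt (real n) * sqrt (real n)"
      proof (rule mult_right_mono)
        show "C + C' \<le> r * \<delta> * sqrt (real n)"
          using elim(3) \<open>0 < r\<close> assms(2) by (simp add: divide_le_eq ac_simps)
      qed simp
      finally show "s - T \<le> \<delta> * real n" using \<open>0 < r\<close> by (simp add: mult.assoc)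
    qed
  qed
qed

lemma count_imbalance_eq_scaled:
  assumes "1 \<le> n" "\<rho> * (\<Sum>r<K. pn n r * qn n r l) = pn n k * qn n k l"
  shows "count_imbalance K (\<lambda>i. Y n i w) (\<lambda>i. f (X n i w)) k l \<rho> (arrivals_n n x)
    = sqrt (real n) * (Ph n (x / real n) (PC k l) - \<rho> * (\<Sum>r<K. Ph n (x / real n) (PC r l)))"
proof -
  have "count_imbalance K (\<lambda>i. Y n i w) (\<lambda>i. f (X n i w)) k l \<rho> (arrivals_n n x)
    = sqrt (real n) * (Ph n (x / real n) (PC k l) - \<rho> * (\<Sum>r<K. Ph n (x / real n) (PC r l)))
      + (pn n k * qn n k l - \<rho> * (\<Sum>r<K. pn n r * qn n r l)) * real (arrivals_n n x)"
    unfolding count_imbalance_def class_count_eq_scaled[OF assms(1)]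
    by (simp add: sum.distrib sum_distrib_left sum_distrib_right algebra_simps)
  then show ?thesis using assms(2) by simp
qed

lemma count_imbalance_increment_eq_scaled:
  assumes "1 \<le> n" "0 < (\<Sum>r<K. pn n r * qn n r l)"
  shows "imbalance_n n k l (arrivals_n n s) - imbalance_n n k l (arrivals_n n T)
    = sqrt (real n) * ((Ph n (s / real n) (PC k l) - Ph n (T / real n) (PC k l))
      - class_share n k l * (\<Sum>r<K. Ph n (s / real n) (PC r l) - Ph n (T / real n) (PC r l)))"
  unfolding count_imbalance_eq_scaled[OF assms(1) class_share_mult_denominator[OF assms(2)]]
  by (simp add: sum_subtractf algebra_simps)

lemma count_imbalance_modulus:
  assumes "k < K" "l < K" "0 < \<epsilon>"
  obtains \<delta> where "0 < \<delta>" "eventually (\<lambda>n. \<forall>T s. 0 \<le> T \<longrightarrow> T \<le> s \<longrightarrow> s \<le> real n \<longrightarrow> s - T \<le> \<delta> * real n \<longrightarrow>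
      \<bar>imbalance_n n k l (arrivals_n n s) - imbalance_n n k l (arrivals_n n T)\<bar>
      \<le> \<epsilon> * sqrt (real n)) sequentially"
proof -
  have "0 < \<epsilon> / (real K + 1)" using assms(3) by simp
  then obtain \<delta> where "0 < \<delta>" and equi: "eventually (\<lambda>n. \<forall>i\<in>Prim K. \<forall>t\<in>{0..1}. \<forall>t'\<in>{0..1}.
      \<bar>t - t'\<bar> \<le> \<delta> \<longrightarrow> \<bar>Ph n t i - Ph n t' i\<bar> \<le> \<epsilon> / (real K + 1)) sequentially"
    using prim_equicontinuous by blast
  from equi class_share_denominator_pos[OF assms(2)] eventually_ge_at_top[of 1]
  have "eventually (\<lambda>n. \<forall>T s. 0 \<le> T \<longrightarrow> T \<le> s \<longrightarrow> s \<le> real n \<longrightarrow> s - T \<le> \<delta> * real n \<longrightarrow>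
      \<bar>imbalance_n n k l (arrivals_n n s) - imbalance_n n k l (arrivals_n n T)\<bar>
      \<le> \<epsilon> * sqrt (real n)) sequentially"
  proof eventually_elim
    case (elim n)
    show ?case
    proof (intro allI impI)
      fix T s assume "0 \<le> T" "T \<le> s" "s \<le> real n" "s - T \<le> \<delta> * real n"
      then have "\<bar>s / real n - T / real n\<bar> \<le> \<delta>" "s / real n \<in> {0..1}" "T / real n \<in> {0..1}"
        using elim(3) by (auto simp: divide_le_eq diff_divide_distrib[symmetric])
      then have "\<bar>Ph n (s / real n) (PC r l) - Ph n (T / real n) (PC r l)\<bar> \<le> \<epsilon> / (real K + 1)"
        if "r < K" for r
        using elim(1) Prim_memI(2)[OF that assms(2)] by blast
      then have "\<bar>(Ph n (s / real n) (PC k l) - Ph n (T / real n) (PC k l))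
          - class_share n k l * (\<Sum>r<K. Ph n (s / real n) (PC r l) - Ph n (T / real n) (PC r l))\<bar>
          \<le> (real K + 1) * (\<epsilon> / (real K + 1))"
        by (intro abs_sub_mult_sum_le[OF class_share_nonneg class_share_le_one[OF assms(1)] assms(1),
              where \<Delta> = "\<lambda>r. Ph n (s / real n) (PC r l) - Ph n (T / real n) (PC r l)"])
      then have bound: "\<bar>(Ph n (s / real n) (PC k l) - Ph n (T / real n) (PC k l))
          - class_share n k l * (\<Sum>r<K. Ph n (s / real n) (PC r l) - Ph n (T / real n) (PC r l))\<bar> \<le> \<epsilon>"
        by simp
      then show "\<bar>imbalance_n n k l (arrivals_n n s) - imbalance_n n k l (arrivals_n n T)\<bar>
        \<le> \<epsilon> * sqrt (real n)"
        unfolding count_imbalance_increment_eq_scaled[OF elim(3,2)]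
        using mult_left_mono[OF bound, of "sqrt (real n)"] by (simp add: abs_mult mult.commute)
    qed
  qed
  with \<open>0 < \<delta>\<close> show ?thesis by (rule that)
qed

lemma batch_at_zero_small:
  assumes "0 < \<epsilon>"
  shows "eventually (\<lambda>n. real (batch_n n 0) \<le> \<epsilon> * sqrt (real n)) sequentially"
proof -
  have "eventually (\<lambda>n. \<forall>t\<in>{0..1}. \<bar>Ph n t PA - B t w PA\<bar> \<le> \<epsilon>) sequentially"
    using prim_conv[OF Prim_memI(1)] assms by simp
  from this system_eventually show ?thesis
  proof eventually_elim
    case (elim n)
    then interpret wc_pfcfs_path K "real n" "\<lambda>i. u n i w" "\<lambda>i. v n i w" "\<lambda>i. Y n i w" "\<lambda>i. f (X n i w)" "c n w"
      by simp
    have "\<bar>Ph n 0 PA - B 0 w PA\<bar> \<le> \<epsilon>" using elim(1) by simp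
    then have "Ph n 0 PA \<le> \<epsilon>" using limit_arrivals_zero by simp
    have "real (batch_n n 0) \<le> real (arrivals_n n 0)"
      using card_arrivals_at_le[of 0] by simp
    also have "\<dots> = sqrt (real n) * Ph n 0 PA" using A0_eq_scaled[of n 0] elim(2) by simp
    also have "\<dots> \<le> sqrt (real n) * \<epsilon>" using \<open>Ph n 0 PA \<le> \<epsilon>\<close> by (rule mult_left_mono) simp
    finally show ?case by (simp add: mult.commute)
  qed
qed

lemma batch_after_zero_small:
  assumes "0 < \<epsilon>"
  shows "eventually (\<lambda>n. \<forall>T. 0 < T \<longrightarrow> T \<le> real n \<longrightarrow>
    real (batch_n n T) \<le> \<epsilon> * sqrt (real n)) sequentially"
proof -
  obtain \<delta> where "0 < \<delta>" and equi: "eventually (\<lambda>n. \<forall>i\<in>Prim K. \<forall>t\<in>{0..1}. \<forall>t'\<in>{0..1}.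
      \<bar>t - t'\<bar> \<le> \<delta> \<longrightarrow> \<bar>Ph n t i - Ph n t' i\<bar> \<le> \<epsilon> / 2) sequentially"
    using prim_equicontinuous[of "\<epsilon> / 2"] assms by auto
  have rate: "eventually (\<lambda>n. lamn n < 2 * lam) sequentially"
    using lam_pos by (intro order_tendstoD(2)[OF lam_n_tendsto]) simp
  have large: "eventually (\<lambda>n. 4 * lam / \<epsilon> \<le> sqrt (real n)) sequentially"
    using sqrt_at_top_sequentially unfolding filterlim_at_top by blast
  have fine: "eventually (\<lambda>n. 1 / real n < \<delta>) sequentially"
    using \<open>0 < \<delta>\<close> by (intro order_tendstoD(2)[OF lim_1_over_n])
  from equi rate large fine system_eventually show ?thesis
  proof (eventually_elim, intro allI impI)
    fix n and T :: real
    assume elim: "\<forall>i\<in>Prim K. \<forall>t\<in>{0..1}. \<forall>t'\<in>{0..1}. \<bar>t - t'\<bar> \<le> \<delta> \<longrightarrow> \<bar>Ph n t i - Ph n t' i\<bar> \<le> \<epsilon> / 2"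
      "lamn n < 2 * lam" "4 * lam / \<epsilon> \<le> sqrt (real n)" "1 / real n < \<delta>"
      "1 \<le> n \<and> wc_pfcfs_path K (real n) (\<lambda>i. u n i w) (\<lambda>i. v n i w) (\<lambda>i. Y n i w) (\<lambda>i. f (X n i w)) (c n w)"
      and T: "0 < T" "T \<le> real n"
    interpret wc_pfcfs_path K "real n" "\<lambda>i. u n i w" "\<lambda>i. v n i w" "\<lambda>i. Y n i w" "\<lambda>i. f (X n i w)" "c n w"
      using elim(5) by simp
    define t where "t = max 0 (T - 1)"
    have t: "0 \<le> t" "t < T" "T - t \<le> 1" using T unfolding t_def by auto
    have "\<bar>T / real n - t / real n\<bar> \<le> \<delta>"
      using elim(4,5) t by (simp add: diff_divide_distrib[symmetric] divide_le_eq divide_less_eq mult.commute)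
    moreover have "T / real n \<in> {0..1}" "t / real n \<in> {0..1}" using t T elim(5) by auto
    ultimately have increment: "\<bar>Ph n (T / real n) PA - Ph n (t / real n) PA\<bar> \<le> \<epsilon> / 2"
      using elim(1) Prim_memI(1)[of K] by blast
    have "sqrt (real n) * (Ph n (T / real n) PA - Ph n (t / real n) PA) \<le> \<epsilon> / 2 * sqrt (real n)"
      using mult_left_mono[OF abs_le_D1[OF increment], of "sqrt (real n)"] by (simp add: mult.commute)
    moreover have "lamn n * (T - t) \<le> 2 * lam * (T - t)" using elim(2) t by (intro mult_right_mono) auto
    moreover have "2 * lam * (T - t) \<le> 2 * lam" using t lam_pos by (simp add: mult_left_le)
    moreover have "2 * lam \<le> \<epsilon> / 2 * sqrt (real n)" using elim(3) assms by (simp add: field_simps)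
    moreover have "real (batch_n n T) \<le> real (arrivals_n n T) - real (arrivals_n n t)"
      using card_arrivals_at_le_diff[OF t(1,2)] A0_mono[of t T] t T by (simp add: of_nat_diff)
    ultimately show "real (batch_n n T) \<le> \<epsilon> * sqrt (real n)"
      using A0_eq_scaled[of n T] A0_eq_scaled[of n t] elim(5) by (simp add: algebra_simps)
  qed
qed

lemma batch_small:
  assumes "0 < \<epsilon>"
  shows "eventually (\<lambda>n. \<forall>T\<in>{0..real n}.
    real (batch_n n T) \<le> \<epsilon> * sqrt (real n)) sequentially"
  using batch_at_zero_small[OF assms] batch_after_zero_small[OF assms]
proof eventually_elim
  case (elim n)
  show ?case
  proof
    fix T assume "T \<in> {0..real n}"
    then show "real (batch_n n T) \<le> \<epsilon> * sqrt (real n)"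
      using elim by (cases "T = 0") auto
  qed
qed

lemma deviation_small:
  assumes "k < K" "l < K" "0 < \<epsilon>"
  shows "eventually (\<lambda>n. \<forall>s\<in>{0..real n}.
    \<bar>real (Nkl_n n k l s) - class_share n k l * real (Nl_n n l s)\<bar>
    \<le> \<epsilon> * sqrt (real n)) sequentially"
proof -
  have "0 < \<epsilon> / 2" using assms(3) by simp
  then obtain \<delta> where "0 < \<delta>" and imbalance: "eventually (\<lambda>n. \<forall>T s. 0 \<le> T \<longrightarrow> T \<le> s \<longrightarrow> s \<le> real n \<longrightarrow>
      s - T \<le> \<delta> * real n \<longrightarrow>
      \<bar>imbalance_n n k l (arrivals_n n s) - imbalance_n n k l (arrivals_n n T)\<bar>
      \<le> \<epsilon> / 2 * sqrt (real n)) sequentially"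
    by (rule count_imbalance_modulus[OF assms(1,2)])
  obtain C where workload: "eventually (\<lambda>n. \<forall>s\<in>{0..real n}. workload_n n s \<le> C * sqrt (real n)) sequentially"
    using workload_bounded by blast
  from imbalance workload window_small_if_class_work_small[OF assms(2) \<open>0 < \<delta>\<close>, of C]
    batch_small[OF \<open>0 < \<epsilon> / 2\<close>] system_eventually
  show ?thesis
  proof eventually_elim
    case (elim n)
    interpret wc_pfcfs_path K "real n" "\<lambda>i. u n i w" "\<lambda>i. v n i w" "\<lambda>i. Y n i w" "\<lambda>i. f (X n i w)" "c n w"
      using elim(5) by simp
    show ?case
    proof
      fix s assume s: "s \<in> {0..real n}"
      obtain T where T: "0 \<le> T" "T \<le> s" "class_work_n n l s - class_work_n n l T \<le> workload_n n s"
        and deviation: "\<bar>real (Nkl_n n k l s) - class_share n k l * real (Nl_n n l s)\<bar>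
          \<le> \<bar>imbalance_n n k l (arrivals_n n s) - imbalance_n n k l (arrivals_n n T)\<bar>
            + real (batch_n n T)"
        by (rule share_deviation_le[OF _ _ class_share_nonneg class_share_le_one[OF assms(1)] assms(1)]) (use s in auto)
      have "workload_n n s \<le> C * sqrt (real n)" using elim(2) s by blast
      with T(3) have "class_work_n n l s - class_work_n n l T \<le> C * sqrt (real n)" by linarith
      then have "s - T \<le> \<delta> * real n" using elim(3) s T(1,2) by simp
      then have "\<bar>imbalance_n n k l (arrivals_n n s) - imbalance_n n k l (arrivals_n n T)\<bar>
        \<le> \<epsilon> / 2 * sqrt (real n)"
        using elim(1) s T(1,2) by simp
      moreover have "real (batch_n n T) \<le> \<epsilon> / 2 * sqrt (real n)" using elim(4) s T(1,2) by simp
      ultimately show "\<bar>real (Nkl_n n k l s) - class_share n k l * real (Nl_n n l s)\<bar>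
          \<le> \<epsilon> * sqrt (real n)"
        using deviation by linarith
    qed
  qed
qed

theorem state_space_collapse:
  assumes "k < K" "l < K" "0 < \<epsilon>"
  shows "\<forall>\<^sub>F n in sequentially. \<forall>t\<in>{0..1}.
    \<bar>real (Nkl_n n k l (real n * t)) / sqrt (real n)
     - pn n k * qn n k l / (\<Sum>r<K. pn n r * qn n r l) * (real (Nl_n n l (real n * t)) / sqrt (real n))\<bar>
    \<le> \<epsilon>"
  using deviation_small[OF assms] eventually_ge_at_top[of 1]
proof eventually_elim
  case (elim n)
  show ?case
  proof
    fix t :: real assume "t \<in> {0..1}"
    then have "real n * t \<in> {0..real n}" by (auto simp: mult_left_le)
    with elim(1) have "\<bar>real (Nkl_n n k l (real n * t)) - class_share n k l * real (Nl_n n l (real n * t))\<bar>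
        \<le> \<epsilon> * sqrt (real n)"
      by blast
    moreover have "0 < sqrt (real n)" using elim(2) by simp
    ultimately show "\<bar>real (Nkl_n n k l (real n * t)) / sqrt (real n)
        - pn n k * qn n k l / (\<Sum>r<K. pn n r * qn n r l) * (real (Nl_n n l (real n * t)) / sqrt (real n))\<bar>
        \<le> \<epsilon>"
      unfolding class_share_def[symmetric] by (intro abs_sub_mult_div_le)
  qed
qed

end

section \<open>Almost sure state-space collapse\<close>

lemma heavy_traffic_exists:
  assumes prob: "prob_space M" and f_meas: "f \<in> borel_measurable borel" and f_range: "\<forall>x. f x < K"
    and iid: "\<And>n. 1 \<le> n \<Longrightarrow> prob_space.indep_vars M (\<lambda>_. borel \<Otimes>\<^sub>M borel \<Otimes>\<^sub>M borel \<Otimes>\<^sub>M count_space UNIV)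
      (\<lambda>i w. (u n i w, v n i w, X n i w, Y n i w)) UNIV"
    and HT: "\<exists>(p :: nat \<Rightarrow> real) (q :: nat \<Rightarrow> nat \<Rightarrow> real) (lam :: real) (mu :: nat \<Rightarrow> real).
       (\<forall>k<K. 0 \<le> p k \<and> p k \<le> 1 \<and> 0 < mu k) \<and>
       (\<forall>k<K. \<forall>l<K. 0 \<le> q k l \<and> q k l \<le> 1) \<and> 0 < lam \<and>
       (\<forall>l<K. (\<Sum>k<K. p k * q k l) > 0) \<and>
       lam * (\<Sum>k<K. p k / mu k) = 1 \<and>
       (\<lambda>n. sqrt (real n) * (lam_n M u n - lam)) \<longlonglongrightarrow> 0 \<and>
       (\<forall>k<K. (\<lambda>n. sqrt (real n) * (mu_n M v Y n k - mu k)) \<longlonglongrightarrow> 0) \<and>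
       (\<forall>k<K. (\<lambda>n. sqrt (real n) * (p_n M Y n k - p k)) \<longlonglongrightarrow> 0) \<and>
       (\<forall>k<K. \<forall>l<K. (\<lambda>n. sqrt (real n) * (q_n M X Y f n k l - q k l)) \<longlonglongrightarrow> 0)"
  shows "\<exists>p q lam mu. heavy_traffic M K u v X Y f p q lam mu"
proof -
  obtain p q lam mu where HT_parts: "\<forall>k<K. 0 \<le> p k \<and> p k \<le> 1 \<and> 0 < mu k"
    "\<forall>k<K. \<forall>l<K. 0 \<le> q k l \<and> q k l \<le> 1" "0 < lam" "\<forall>l<K. (\<Sum>k<K. p k * q k l) > 0"
    "lam * (\<Sum>k<K. p k / mu k) = 1" "(\<lambda>n. sqrt (real n) * (lam_n M u n - lam)) \<longlonglongrightarrow> 0"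
    "\<forall>k<K. (\<lambda>n. sqrt (real n) * (mu_n M v Y n k - mu k)) \<longlonglongrightarrow> 0"
    "\<forall>k<K. (\<lambda>n. sqrt (real n) * (p_n M Y n k - p k)) \<longlonglongrightarrow> 0"
    "\<forall>k<K. \<forall>l<K. (\<lambda>n. sqrt (real n) * (q_n M X Y f n k l - q k l)) \<longlonglongrightarrow> 0"
    using HT by blast
  have q_lim: "(\<lambda>n. q_n M X Y f n k l) \<longlonglongrightarrow> q k l" if "k < K" "l < K" for k l
    by (rule tendsto_of_sqrt_rate) (use HT_parts(9) that in blast)
  have probs_sum: "(\<Sum>l<K. p_n M Y n k * q_n M X Y f n k l) = p_n M Y n k" if "1 \<le> n" for n k
  proof -
    note measurable = indep_vars_measurable_components[OF prob iid[OF that]]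
    show ?thesis
      by (rule sum_p_n_q_n[where Y = Y and X = X and n = n, OF prob measurable(1)
            measurable_compose[OF measurable(2) f_meas]])
        (use f_range in blast)
  qed
  have "heavy_traffic M K u v X Y f p q lam mu"
    by unfold_locales (use HT_parts q_lim probs_sum f_range in auto)
  then show ?thesis by blast
qed

lemma (in heavy_traffic) AE_heavy_traffic_path:
  assumes "brownian_motion01 M (Prim K) B"
    and "AE w in M. \<forall>i\<in>Prim K. \<forall>\<epsilon>>0. \<forall>\<^sub>F n in sequentially. \<forall>t\<in>{0..1}.
      \<bar>prim_hat M u v X Y f n w t i - B t w i\<bar> \<le> \<epsilon>"
    and "\<forall>n\<ge>1. \<forall>i. \<forall>w\<in>space M. 0 \<le> u n i w \<and> 0 < v n i w \<and> Y n i w < K"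
    and "\<forall>n\<ge>1. AE w in M.
      wc_pfcfs_policy K (real n) (\<lambda>i. u n i w) (\<lambda>i. v n i w) (\<lambda>i. Y n i w) (\<lambda>i. f (X n i w)) (c n w)"
  shows "AE w in M. heavy_traffic_path M K u v X Y f p q lam mu c w B"
proof -
  have paths: "AE w in M. \<forall>i\<in>Prim K. B 0 w i = 0 \<and> continuous_on {0..1} (\<lambda>t. B t w i)"
    using assms(1) unfolding brownian_motion01_def by blast
  have "AE w in M. \<forall>n. 1 \<le> n \<longrightarrow>
      wc_pfcfs_policy K (real n) (\<lambda>i. u n i w) (\<lambda>i. v n i w) (\<lambda>i. Y n i w) (\<lambda>i. f (X n i w)) (c n w)"
    unfolding AE_all_countable
  proof
    fix n :: nat
    show "AE w in M. 1 \<le> n \<longrightarrow>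
        wc_pfcfs_policy K (real n) (\<lambda>i. u n i w) (\<lambda>i. v n i w) (\<lambda>i. Y n i w) (\<lambda>i. f (X n i w)) (c n w)"
      using assms(4) by (cases "1 \<le> n") auto
  qed
  with AE_space assms(2) paths show ?thesis
  proof eventually_elim
    case (elim w)
    then show ?case using assms(3) Prim_memI(1) by unfold_locales auto
  qed
qed

theorem mainTheorem1:
  fixes M :: "'w measure" and K :: nat
    and u v :: "nat \<Rightarrow> nat \<Rightarrow> 'w \<Rightarrow> real"
    and X :: "nat \<Rightarrow> nat \<Rightarrow> 'w \<Rightarrow> 'x::euclidean_space"
    and Y :: "nat \<Rightarrow> nat \<Rightarrow> 'w \<Rightarrow> nat"
    and f :: "'x \<Rightarrow> nat"
    and c :: "nat \<Rightarrow> 'w \<Rightarrow> real \<Rightarrow> nat option"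
  assumes prob: "prob_space M"
    and f_meas: "f \<in> borel_measurable borel"
    and f_range: "\<forall>x. f x < K"
    and model: "\<forall>n\<ge>1. \<forall>i. \<forall>w\<in>space M. 0 \<le> u n i w \<and> 0 < v n i w \<and> Y n i w < K"
    and DGP_iid: "\<forall>n\<ge>1.
       prob_space.indep_vars M (\<lambda>_. borel \<Otimes>\<^sub>M borel \<Otimes>\<^sub>M borel \<Otimes>\<^sub>M count_space UNIV)
         (\<lambda>i w. (u n i w, v n i w, X n i w, Y n i w)) UNIV \<and>
       (\<forall>i. distr M (borel \<Otimes>\<^sub>M borel \<Otimes>\<^sub>M borel \<Otimes>\<^sub>M count_space UNIV)
               (\<lambda>w. (u n i w, v n i w, X n i w, Y n i w))
          = distr M (borel \<Otimes>\<^sub>M borel \<Otimes>\<^sub>M borel \<Otimes>\<^sub>M count_space UNIV)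
               (\<lambda>w. (u n 0 w, v n 0 w, X n 0 w, Y n 0 w)))"
    and DGP_indep: "\<forall>n\<ge>1.
       prob_space.indep_set M
         (sets (vimage_algebra (space M) (\<lambda>w i. u n i w) (PiM UNIV (\<lambda>_. borel))))
         (sets (vimage_algebra (space M) (\<lambda>w i. (v n i w, X n i w, Y n i w))
            (PiM UNIV (\<lambda>_. borel \<Otimes>\<^sub>M borel \<Otimes>\<^sub>M count_space UNIV))))"
    and DGP_condindep: "\<forall>n\<ge>1. \<forall>i k (A :: real set) (B :: 'x set).
       A \<in> sets borel \<longrightarrow> B \<in> sets borel \<longrightarrow>
       measure M {w \<in> space M. v n i w \<in> A \<and> X n i w \<in> B \<and> Y n i w = k}
         * measure M {w \<in> space M. Y n i w = k}
       = measure M {w \<in> space M. v n i w \<in> A \<and> Y n i w = k}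
         * measure M {w \<in> space M. X n i w \<in> B \<and> Y n i w = k}"
    and HT: "\<exists>(p :: nat \<Rightarrow> real) (q :: nat \<Rightarrow> nat \<Rightarrow> real) (lam :: real) (mu :: nat \<Rightarrow> real).
       (\<forall>k<K. 0 \<le> p k \<and> p k \<le> 1 \<and> 0 < mu k) \<and>
       (\<forall>k<K. \<forall>l<K. 0 \<le> q k l \<and> q k l \<le> 1) \<and> 0 < lam \<and>
       (\<forall>l<K. (\<Sum>k<K. p k * q k l) > 0) \<and>
       lam * (\<Sum>k<K. p k / mu k) = 1 \<and>
       (\<lambda>n. sqrt (real n) * (lam_n M u n - lam)) \<longlonglongrightarrow> 0 \<and>
       (\<forall>k<K. (\<lambda>n. sqrt (real n) * (mu_n M v Y n k - mu k)) \<longlonglongrightarrow> 0) \<and>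
       (\<forall>k<K. (\<lambda>n. sqrt (real n) * (p_n M Y n k - p k)) \<longlonglongrightarrow> 0) \<and>
       (\<forall>k<K. \<forall>l<K. (\<lambda>n. sqrt (real n) * (q_n M X Y f n k l - q k l)) \<longlonglongrightarrow> 0)"
    and UI_moments: "\<forall>n\<ge>1. integrable M (\<lambda>w. (u n 0 w)\<^sup>2) \<and> integrable M (\<lambda>w. (v n 0 w)\<^sup>2)
       \<and> integrable M (\<lambda>w. (norm (X n 0 w))\<^sup>2)"
    and UI_tails: "\<exists>gu gv :: real \<Rightarrow> real. (gu \<longlongrightarrow> 0) at_top \<and> (gv \<longlongrightarrow> 0) at_top \<and>
       (\<forall>n\<ge>1. \<forall>x. (\<integral>w. (u n 0 w)\<^sup>2 * indicator {w. u n 0 w > x} w \<partial>M) \<le> gu x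
                 \<and> (\<integral>w. (v n 0 w)\<^sup>2 * indicator {w. v n 0 w > x} w \<partial>M) \<le> gv x)"
    and UI_lim_u: "\<exists>\<alpha>u>0. (\<lambda>n. \<integral>w. (u n 0 w)\<^sup>2 \<partial>M) \<longlonglongrightarrow> \<alpha>u"
    and UI_lim_v: "\<forall>k<K. \<exists>\<alpha>v>0.
       (\<lambda>n. cond_exp_class M (\<lambda>w. (v n 0 w)\<^sup>2) (Y n 0) k) \<longlonglongrightarrow> \<alpha>v"
    and skorohod: "\<exists>B. brownian_motion01 M (Prim K) B \<and>
       (AE w in M. \<forall>i\<in>Prim K. \<forall>\<epsilon>>0. \<forall>\<^sub>F n in sequentially. \<forall>t\<in>{0..1}.
          \<bar>prim_hat M u v X Y f n w t i - B t w i\<bar> \<le> \<epsilon>)"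
    and policy: "\<forall>n\<ge>1. AE w in M.
       wc_pfcfs_policy K (real n) (\<lambda>i. u n i w) (\<lambda>i. v n i w) (\<lambda>i. Y n i w) (\<lambda>i. f (X n i w)) (c n w)"
  shows "AE w in M. \<forall>k<K. \<forall>l<K. \<forall>\<epsilon>>0. \<forall>\<^sub>F n in sequentially. \<forall>t\<in>{0..1}.
     \<bar>real (Nkl (\<lambda>i. u n i w) (\<lambda>i. v n i w) (\<lambda>i. Y n i w) (\<lambda>i. f (X n i w)) (c n w) k l (real n * t))
        / sqrt (real n)
      - p_n M Y n k * q_n M X Y f n k l / (\<Sum>r<K. p_n M Y n r * q_n M X Y f n r l)
        * (real (Nl K (\<lambda>i. u n i w) (\<lambda>i. v n i w) (\<lambda>i. Y n i w) (\<lambda>i. f (X n i w)) (c n w) l (real n * t))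
           / sqrt (real n))\<bar> \<le> \<epsilon>"
proof -
  obtain p q lam mu where "heavy_traffic M K u v X Y f p q lam mu"
    using heavy_traffic_exists[OF prob f_meas f_range _ HT] DGP_iid by blast
  then interpret heavy_traffic M K u v X Y f p q lam mu .
  obtain B where "brownian_motion01 M (Prim K) B"
    and "AE w in M. \<forall>i\<in>Prim K. \<forall>\<epsilon>>0. \<forall>\<^sub>F n in sequentially. \<forall>t\<in>{0..1}.
      \<bar>prim_hat M u v X Y f n w t i - B t w i\<bar> \<le> \<epsilon>"
    using skorohod by blast
  then have "AE w in M. heavy_traffic_path M K u v X Y f p q lam mu c w B"
    using model policy by (rule AE_heavy_traffic_path)
  then show ?thesis by eventually_elim (blast intro: heavy_traffic_path.state_space_collapse)
qed

end
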